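(* Let $p$ be a prime, $S$ a finite non-abelian simple group, $G$ the universal $p'$-covering group of $S$, $\chi\in\mathrm{Irr}(G)$, and $\bar G:=G/(\ker\chi\cap Z(G))$. Then there exists a finite group $A$ such that: (a) $A$ contains $\bar G$ as a normal subgroup, the conjugation action induces an isomorphism $A/C_A(\bar G)\cong\mathrm{Aut}(G)_\chi$, and $C_A(\bar G)=Z(A)$; (b) the character $\bar\chi\in\mathrm{Irr}(\bar G)$ whose inflation to $G$ is $\chi$ extends to $A$.
   Context: Universal $p'$-covering group of $S$: $Y/Z(Y)_p$, where $Y$ is the universal covering group of $S$ (perfect, $Y/Z(Y)\cong S$, $|Z(Y)|$ maximal) and $Z(Y)_p$ the Sylow $p$-subgroup of $Z(Y)$. $\mathrm{Aut}(G)_\chi$ is the stabilizer of $\chi$ in $\mathrm{Aut}(G)$; its elements stabilize $\ker\chi\cap Z(G)$ and thus act on $\bar G$. *)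

theory Defs
  imports "HOL-Algebra.Group" "HOL-Algebra.Coset" "HOL-Algebra.Bij"
    "HOL-Algebra.SimpleGroups" "HOL-Algebra.Generated_Groups"
    "Jordan_Normal_Form.Matrix"
begin

definition grp_center :: "('a, 'b) monoid_scheme \<Rightarrow> 'a set" where
  "grp_center G = {z \<in> carrier G. \<forall>g \<in> carrier G. z \<otimes>\<^bsub>G\<^esub> g = g \<otimes>\<^bsub>G\<^esub> z}"

definition grp_centralizer :: "('a, 'b) monoid_scheme \<Rightarrow> 'a set \<Rightarrow> 'a set" where
  "grp_centralizer G H = {a \<in> carrier G. \<forall>h \<in> H. a \<otimes>\<^bsub>G\<^esub> h = h \<otimes>\<^bsub>G\<^esub> a}"

definition perfect_group :: "('a, 'b) monoid_scheme \<Rightarrow> bool" where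
  "perfect_group G \<longleftrightarrow> group G \<and> derived G (carrier G) = carrier G"

text \<open>Sylow p-subgroup of the (abelian) centre: its p-elements.\<close>
definition center_p_part :: "nat \<Rightarrow> ('a, 'b) monoid_scheme \<Rightarrow> 'a set" where
  "center_p_part p Y = {z \<in> grp_center Y. \<exists>k::nat. z [^]\<^bsub>Y\<^esub> (p ^ k) = \<one>\<^bsub>Y\<^esub>}"

text \<open>Universal covering group: perfect, Y/Z(Y) isomorphic to S, |Z(Y)| maximal.
  Competitors range over groups with carrier in nat, which (up to isomorphism)
  covers all finite groups.\<close>
definition universal_covering_group ::
  "('b, 'x) monoid_scheme \<Rightarrow> ('s, 'y) monoid_scheme \<Rightarrow> bool" where
  "universal_covering_group Y S \<longleftrightarrow>
     perfect_group Y \<and> finite (carrier Y) \<and> (Y Mod grp_center Y) \<cong> S \<and>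
     (\<forall>Y' :: nat monoid. perfect_group Y' \<and> (Y' Mod grp_center Y') \<cong> S \<longrightarrow>
        card (grp_center Y') \<le> card (grp_center Y))"

definition universal_p'_covering_group ::
  "nat \<Rightarrow> ('a, 'z) monoid_scheme \<Rightarrow> ('s, 'y) monoid_scheme \<Rightarrow> bool" where
  "universal_p'_covering_group p G S \<longleftrightarrow>
     (\<exists>Y :: nat monoid. universal_covering_group Y S \<and>
        G \<cong> (Y Mod center_p_part p Y))"

definition mat_trace :: "complex mat \<Rightarrow> complex" where
  "mat_trace M = (\<Sum>i < dim_row M. M $$ (i, i))"

definition representation ::
  "('a, 'b) monoid_scheme \<Rightarrow> nat \<Rightarrow> ('a \<Rightarrow> complex mat) \<Rightarrow> bool" where
  "representation G n \<rho> \<longleftrightarrow>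
     (\<forall>g \<in> carrier G. \<rho> g \<in> carrier_mat n n) \<and>
     \<rho> \<one>\<^bsub>G\<^esub> = 1\<^sub>m n \<and>
     (\<forall>g \<in> carrier G. \<forall>h \<in> carrier G. \<rho> (g \<otimes>\<^bsub>G\<^esub> h) = \<rho> g * \<rho> h)"

definition vec_subspace :: "nat \<Rightarrow> complex vec set \<Rightarrow> bool" where
  "vec_subspace n W \<longleftrightarrow> W \<subseteq> carrier_vec n \<and> 0\<^sub>v n \<in> W \<and>
     (\<forall>v \<in> W. \<forall>w \<in> W. v + w \<in> W) \<and> (\<forall>c. \<forall>v \<in> W. c \<cdot>\<^sub>v v \<in> W)"

definition irreducible_rep ::
  "('a, 'b) monoid_scheme \<Rightarrow> nat \<Rightarrow> ('a \<Rightarrow> complex mat) \<Rightarrow> bool" where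
  "irreducible_rep G n \<rho> \<longleftrightarrow> representation G n \<rho> \<and> n > 0 \<and>
     (\<forall>W. vec_subspace n W \<and> (\<forall>g \<in> carrier G. \<forall>w \<in> W. \<rho> g *\<^sub>v w \<in> W)
        \<longrightarrow> W = {0\<^sub>v n} \<or> W = carrier_vec n)"

definition irr_char :: "('a, 'b) monoid_scheme \<Rightarrow> ('a \<Rightarrow> complex) \<Rightarrow> bool" where
  "irr_char G \<chi> \<longleftrightarrow> (\<exists>n \<rho>. irreducible_rep G n \<rho> \<and>
     (\<forall>g \<in> carrier G. \<chi> g = mat_trace (\<rho> g)))"

definition char_kernel :: "('a, 'b) monoid_scheme \<Rightarrow> ('a \<Rightarrow> complex) \<Rightarrow> 'a set" where
  "char_kernel G \<chi> = {g \<in> carrier G. \<chi> g = \<chi> \<one>\<^bsub>G\<^esub>}"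

definition aut_stab :: "('a, 'b) monoid_scheme \<Rightarrow> ('a \<Rightarrow> complex) \<Rightarrow> ('a \<Rightarrow> 'a) monoid" where
  "aut_stab G \<chi> = (AutoGroup G)\<lparr>carrier :=
     {\<alpha> \<in> auto G. \<forall>g \<in> carrier G. \<chi> (\<alpha> g) = \<chi> g}\<rparr>"

end

(*
  Let \<rho> be an irreducible representation affording \<chi>. For a \<chi>-stable automorphism \<alpha>, the
  representation \<rho> \<circ> \<alpha> has the same character, so by the orthogonality relation it is similar
  to \<rho>: some invertible M satisfies M \<rho>(g) = \<rho>(\<alpha> g) M, and by Schur's lemma M is unique up to
  a scalar. The pairs (\<alpha>, M) normalised by det M ^ |G| = 1 form a finite group A. The map
  g \<mapsto> (conjugation by g, \<rho> g) embeds G/(ker \<chi> \<inter> Z(G)) into A as a normal subgroup, and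
  (\<alpha>, M) \<mapsto> tr M is an irreducible character of A extending \<chi>. An element of A centralising
  the image of G has an automorphism part inducing the same inner automorphisms as the identity;
  since G is perfect it is the identity, so its matrix is scalar and the element is central.
  Hence C_A(G) = Z(A) is the kernel of (\<alpha>, M) \<mapsto> \<alpha>, which is onto Aut(G)_\<chi>.
*)

theory Submission
  imports Defs "HOL-Library.Countable_Set" "HOL-Algebra.Multiplicative_Group"
    "Jordan_Normal_Form.Spectral_Radius"
begin

section \<open>Matrices\<close>

lemma mult_carrier_mat_square [simp]:
  "A \<in> carrier_mat n n \<Longrightarrow> B \<in> carrier_mat n n \<Longrightarrow> A * B \<in> carrier_mat n n"
  by (rule mult_carrier_mat)

lemma one_mult_mat_square [simp]: "(A :: 'a :: semiring_1 mat) \<in> carrier_mat n n \<Longrightarrow> 1\<^sub>m n * A = A"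
  by (rule left_mult_one_mat)

lemma mult_one_mat_square [simp]: "(A :: 'a :: semiring_1 mat) \<in> carrier_mat n n \<Longrightarrow> A * 1\<^sub>m n = A"
  by (rule right_mult_one_mat)

lemma mat_eq_smult_one_by_vec:
  assumes M: "M \<in> carrier_mat n n"
    and eig: "\<And>v. v \<in> carrier_vec n \<Longrightarrow> M *\<^sub>v v = (c :: 'a :: comm_ring_1) \<cdot>\<^sub>v v"
  shows "M = c \<cdot>\<^sub>m 1\<^sub>m n"
proof (rule eq_matI)
  fix i j assume "i < dim_row (c \<cdot>\<^sub>m 1\<^sub>m n)" "j < dim_col (c \<cdot>\<^sub>m 1\<^sub>m n)"
  then have ij: "i < n" "j < n" by auto
  have "M $$ (i, j) = (M *\<^sub>v unit_vec n j) $ i"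
    using M ij by (subst index_mult_mat_vec) (auto simp: carrier_matD)
  also have "\<dots> = (c \<cdot>\<^sub>m 1\<^sub>m n) $$ (i, j)"
    using eig[of "unit_vec n j"] ij by auto
  finally show "M $$ (i, j) = (c \<cdot>\<^sub>m 1\<^sub>m n) $$ (i, j)" .
qed (use M in auto)

lemma det_nonzero_imp_inverse:
  assumes "(A :: 'a :: field mat) \<in> carrier_mat n n" and "det A \<noteq> 0"
  shows "\<exists>B \<in> carrier_mat n n. A * B = 1\<^sub>m n \<and> B * A = 1\<^sub>m n"
  using det_non_zero_imp_unit[OF assms, of "()"] unfolding Units_def ring_mat_def by auto

lemma index_mult_mat_sum:
  assumes "A \<in> carrier_mat n n" "B \<in> carrier_mat n n" "i < n" "j < n"
  shows "(A * B) $$ (i, j) = (\<Sum>k<n. A $$ (i, k) * B $$ (k, j))"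
  using assms by (auto simp: scalar_prod_def atLeast0LessThan intro!: sum.cong)

lemma mat_trace_mult_comm:
  assumes "A \<in> carrier_mat n n" "B \<in> carrier_mat n n"
  shows "mat_trace (A * B) = mat_trace (B * A)"
proof -
  have "mat_trace (A * B) = (\<Sum>i<n. \<Sum>k<n. A $$ (i, k) * B $$ (k, i))"
    using assms unfolding mat_trace_def by (intro sum.cong) (auto simp: scalar_prod_def atLeast0LessThan)
  also have "\<dots> = (\<Sum>k<n. \<Sum>i<n. B $$ (k, i) * A $$ (i, k))"
    by (subst sum.swap) (simp add: mult.commute)
  also have "\<dots> = mat_trace (B * A)"
    using assms unfolding mat_trace_def by (intro sum.cong) (auto simp: scalar_prod_def atLeast0LessThan)
  finally show ?thesis .
qed

lemma one_smult_mat [simp]: "(1 :: 'a :: semiring_1) \<cdot>\<^sub>m A = A"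
  by (intro eq_matI) auto

lemma mat_trace_smult_one [simp]: "mat_trace (c \<cdot>\<^sub>m 1\<^sub>m n) = c * of_nat n"
  unfolding mat_trace_def by simp

lemma mat_trace_one [simp]: "mat_trace (1\<^sub>m n) = of_nat n"
  unfolding mat_trace_def by simp

lemma complex_nth_root_exists: "0 < n \<Longrightarrow> \<exists>c::complex. c ^ n = w"
proof -
  assume n: "0 < n"
  have "rcis (root n (cmod w)) (Arg w / real n) ^ n = rcis (root n (cmod w) ^ n) (real n * (Arg w / real n))"
    by (rule DeMoivre2)
  also have "\<dots> = w" using n by (simp add: rcis_cmod_Arg)
  finally show ?thesis by blast
qed

definition mat_sum :: "nat \<Rightarrow> ('x \<Rightarrow> complex mat) \<Rightarrow> 'x set \<Rightarrow> complex mat" where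
  "mat_sum n f I = mat n n (\<lambda>(i, j). \<Sum>x\<in>I. f x $$ (i, j))"

lemma mat_sum_carrier [simp]: "mat_sum n f I \<in> carrier_mat n n"
  unfolding mat_sum_def by simp

lemma mat_sum_dim [simp]: "dim_row (mat_sum n f I) = n" "dim_col (mat_sum n f I) = n"
  unfolding mat_sum_def by simp_all

lemma mat_sum_index: "i < n \<Longrightarrow> j < n \<Longrightarrow> mat_sum n f I $$ (i, j) = (\<Sum>x\<in>I. f x $$ (i, j))"
  unfolding mat_sum_def by simp

lemma mat_sum_mult_left:
  assumes A: "A \<in> carrier_mat n n" and f: "\<And>x. x \<in> I \<Longrightarrow> f x \<in> carrier_mat n n"
  shows "A * mat_sum n f I = mat_sum n (\<lambda>x. A * f x) I"
proof (rule eq_matI)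
  fix i j assume "i < dim_row (mat_sum n (\<lambda>x. A * f x) I)" "j < dim_col (mat_sum n (\<lambda>x. A * f x) I)"
  hence ij: "i < n" "j < n" by auto
  have "(A * mat_sum n f I) $$ (i, j) = (\<Sum>k<n. A $$ (i, k) * (\<Sum>x\<in>I. f x $$ (k, j)))"
    using A ij by (auto simp: scalar_prod_def mat_sum_index atLeast0LessThan intro!: sum.cong)
  also have "\<dots> = (\<Sum>x\<in>I. \<Sum>k<n. A $$ (i, k) * f x $$ (k, j))"
    by (simp add: sum_distrib_left sum.swap[of _ I])
  also have "\<dots> = mat_sum n (\<lambda>x. A * f x) I $$ (i, j)"
    using A ij f by (auto simp: mat_sum_index index_mult_mat_sum intro!: sum.cong)
  finally show "(A * mat_sum n f I) $$ (i, j) = mat_sum n (\<lambda>x. A * f x) I $$ (i, j)" .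
qed (use A in auto)

lemma mat_sum_mult_right:
  assumes A: "A \<in> carrier_mat n n" and f: "\<And>x. x \<in> I \<Longrightarrow> f x \<in> carrier_mat n n"
  shows "mat_sum n f I * A = mat_sum n (\<lambda>x. f x * A) I"
proof (rule eq_matI)
  fix i j assume "i < dim_row (mat_sum n (\<lambda>x. f x * A) I)" "j < dim_col (mat_sum n (\<lambda>x. f x * A) I)"
  hence ij: "i < n" "j < n" by auto
  have "(mat_sum n f I * A) $$ (i, j) = (\<Sum>k<n. (\<Sum>x\<in>I. f x $$ (i, k)) * A $$ (k, j))"
    using A ij by (auto simp: scalar_prod_def mat_sum_index atLeast0LessThan intro!: sum.cong)
  also have "\<dots> = (\<Sum>x\<in>I. \<Sum>k<n. f x $$ (i, k) * A $$ (k, j))"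
    by (simp add: sum_distrib_right sum.swap[of _ I])
  also have "\<dots> = mat_sum n (\<lambda>x. f x * A) I $$ (i, j)"
    unfolding mat_sum_index[OF ij] by (intro sum.cong refl, subst index_mult_mat_sum[OF f]) (use A ij in auto)
  finally show "(mat_sum n f I * A) $$ (i, j) = mat_sum n (\<lambda>x. f x * A) I $$ (i, j)" .
qed (use A in auto)

lemma mat_sum_reindex:
  assumes "bij_betw h J I"
  shows "mat_sum n f I = mat_sum n (\<lambda>x. f (h x)) J"
proof -
  have "(\<Sum>x\<in>J. f (h x) $$ ij) = (\<Sum>x\<in>I. f x $$ ij)" for ij
    using sum.reindex_bij_betw[OF assms, of "\<lambda>x. f x $$ ij"] by simp
  then show ?thesis unfolding mat_sum_def by simp
qed

lemma mat_sum_cong: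
  "(\<And>x. x \<in> I \<Longrightarrow> f x = g x) \<Longrightarrow> mat_sum n f I = mat_sum n g I"
  unfolding mat_sum_def by (intro cong_mat refl) (auto intro!: sum.cong)

lemma mat_trace_mat_sum:
  "(\<And>x. x \<in> I \<Longrightarrow> f x \<in> carrier_mat n n) \<Longrightarrow> mat_trace (mat_sum n f I) = (\<Sum>x\<in>I. mat_trace (f x))"
  unfolding mat_trace_def mat_sum_def by (auto simp: sum.swap[of _ I] intro!: sum.cong)

definition elem_mat :: "nat \<Rightarrow> nat \<Rightarrow> nat \<Rightarrow> complex mat" where
  "elem_mat n k i = mat n n (\<lambda>(a, b). if a = k \<and> b = i then 1 else 0)"

lemma elem_mat_carrier [simp]: "elem_mat n k i \<in> carrier_mat n n"
  unfolding elem_mat_def by simp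

lemma mat_trace_elem_mat: "k < n \<Longrightarrow> i < n \<Longrightarrow> mat_trace (elem_mat n k i) = (if k = i then 1 else 0)"
  unfolding mat_trace_def elem_mat_def by (auto simp: sum.delta)

lemma elem_mat_sandwich_entry:
  assumes S: "S \<in> carrier_mat n n" and R: "R \<in> carrier_mat n n" and ki: "k < n" "i < n"
  shows "(S * elem_mat n k i * R) $$ (k, i) = S $$ (k, k) * R $$ (i, i)"
proof -
  have left: "(S * elem_mat n k i) $$ (k, b) = (if b = i then S $$ (k, k) else 0)" if b: "b < n" for b
  proof -
    have "(S * elem_mat n k i) $$ (k, b) = (\<Sum>l<n. S $$ (k, l) * elem_mat n k i $$ (l, b))"
      using S ki b by (intro index_mult_mat_sum) auto
    also have "\<dots> = (\<Sum>l<n. if l = k then (if b = i then S $$ (k, l) else 0) else 0)"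
      using ki b by (intro sum.cong) (auto simp: elem_mat_def)
    finally show ?thesis using ki by (simp add: sum.delta)
  qed
  have "(S * elem_mat n k i * R) $$ (k, i) = (\<Sum>b<n. (S * elem_mat n k i) $$ (k, b) * R $$ (b, i))"
    using S R ki by (intro index_mult_mat_sum) auto
  also have "\<dots> = (\<Sum>b<n. if b = i then S $$ (k, k) * R $$ (b, i) else 0)"
    by (intro sum.cong) (auto simp: left)
  also have "\<dots> = S $$ (k, k) * R $$ (i, i)"
    using ki by (simp add: sum.delta)
  finally show ?thesis .
qed


section \<open>Centres, inner automorphisms and automorphism stabilisers\<close>

definition inner_aut :: "('a, 'b) monoid_scheme \<Rightarrow> 'a \<Rightarrow> 'a \<Rightarrow> 'a" where
  "inner_aut G g = (\<lambda>x \<in> carrier G. g \<otimes>\<^bsub>G\<^esub> x \<otimes>\<^bsub>G\<^esub> inv\<^bsub>G\<^esub> g)"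

context group
begin

lemma inv_mult_cancel_left [simp]: "g \<in> carrier G \<Longrightarrow> z \<in> carrier G \<Longrightarrow> inv g \<otimes> (g \<otimes> z) = z"
  by (simp add: m_assoc[symmetric])

lemma mult_inv_cancel_left [simp]: "g \<in> carrier G \<Longrightarrow> z \<in> carrier G \<Longrightarrow> g \<otimes> (inv g \<otimes> z) = z"
  by (simp add: m_assoc[symmetric])

lemma grp_centerD:
  assumes "z \<in> grp_center G"
  shows "z \<in> carrier G" and "g \<in> carrier G \<Longrightarrow> z \<otimes> g = g \<otimes> z"
  using assms unfolding grp_center_def by auto

lemma grp_center_subgroup: "subgroup (grp_center G) G"
proof (rule subgroupI)
  show "grp_center G \<subseteq> carrier G" using grp_centerD by blast
  have "\<one> \<in> grp_center G" unfolding grp_center_def by simp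
  then show "grp_center G \<noteq> {}" by blast
next
  fix a assume a: "a \<in> grp_center G"
  note a' = grp_centerD[OF a]
  have "inv a \<otimes> g = g \<otimes> inv a" if g: "g \<in> carrier G" for g
  proof -
    have "inv a \<otimes> g = inv a \<otimes> (g \<otimes> a) \<otimes> inv a" using a'(1) g by (simp add: m_assoc)
    also have "\<dots> = inv a \<otimes> (a \<otimes> g) \<otimes> inv a" using a'(2)[OF g] by simp
    also have "\<dots> = g \<otimes> inv a" using a'(1) g by (simp add: m_assoc)
    finally show ?thesis .
  qed
  then show "inv a \<in> grp_center G" using a'(1) unfolding grp_center_def by simp
next
  fix a b assume a: "a \<in> grp_center G" and b: "b \<in> grp_center G"
  note a' = grp_centerD[OF a] and b' = grp_centerD[OF b]
  have "a \<otimes> b \<otimes> g = g \<otimes> (a \<otimes> b)" if g: "g \<in> carrier G" for g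
  proof -
    have "a \<otimes> b \<otimes> g = a \<otimes> (g \<otimes> b)" using a'(1) b'(1) b'(2)[OF g, symmetric] g by (simp add: m_assoc)
    also have "\<dots> = a \<otimes> g \<otimes> b" using a'(1) b'(1) g by (simp add: m_assoc)
    also have "\<dots> = g \<otimes> a \<otimes> b" using a'(2)[OF g] by simp
    also have "\<dots> = g \<otimes> (a \<otimes> b)" using a'(1) b'(1) g by (simp add: m_assoc)
    finally show ?thesis .
  qed
  then show "a \<otimes> b \<in> grp_center G" using a'(1) b'(1) unfolding grp_center_def by simp
qed

lemma central_subgroup_normal:
  assumes K: "subgroup K G" and central: "K \<subseteq> grp_center G"
  shows "K \<lhd> G"
  unfolding normal_inv_iff
proof (intro conjI ballI K)
  fix x h assume x: "x \<in> carrier G" and h: "h \<in> K"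
  have hZ: "h \<in> grp_center G" using central h by blast
  have "x \<otimes> h \<otimes> inv x = h \<otimes> x \<otimes> inv x" using grp_centerD(2)[OF hZ x, symmetric] by simp
  also have "\<dots> = h" using grp_centerD(1)[OF hZ] x by (simp add: m_assoc)
  finally show "x \<otimes> h \<otimes> inv x \<in> K" using h by simp
qed

lemma inner_aut_apply [simp]: "x \<in> carrier G \<Longrightarrow> inner_aut G g x = g \<otimes> x \<otimes> inv g"
  unfolding inner_aut_def by simp

lemma inner_aut_auto: assumes g: "g \<in> carrier G" shows "inner_aut G g \<in> auto G"
proof -
  have "inner_aut G g ` carrier G = carrier G"
  proof
    show "carrier G \<subseteq> inner_aut G g ` carrier G"
    proof
      fix y assume y: "y \<in> carrier G"
      have "y = inner_aut G g (inv g \<otimes> y \<otimes> g)" using g y by (simp add: m_assoc)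
      then show "y \<in> inner_aut G g ` carrier G" using g y by blast
    qed
  qed (use g in auto)
  moreover have "inj_on (inner_aut G g) (carrier G)" using g by (intro inj_onI) simp
  moreover have "inner_aut G g \<in> hom G G" unfolding hom_def using g by (simp add: m_assoc)
  ultimately show ?thesis unfolding auto_def Bij_def bij_betw_def by (simp add: inner_aut_def)
qed

lemma inner_aut_central_mult:
  assumes z: "z \<in> grp_center G" and g: "g \<in> carrier G"
  shows "inner_aut G (z \<otimes> g) = inner_aut G g"
proof (rule ext)
  fix y
  note z' = grp_centerD[OF z]
  show "inner_aut G (z \<otimes> g) y = inner_aut G g y"
  proof (cases "y \<in> carrier G")
    case True
    have "z \<otimes> g \<otimes> y \<otimes> inv (z \<otimes> g) = z \<otimes> (g \<otimes> y \<otimes> inv g) \<otimes> inv z"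
      using z'(1) g True by (simp add: m_assoc inv_mult_group)
    also have "\<dots> = g \<otimes> y \<otimes> inv g \<otimes> z \<otimes> inv z"
      using z'(2)[of "g \<otimes> y \<otimes> inv g"] z'(1) g True by simp
    also have "\<dots> = g \<otimes> y \<otimes> inv g"
      using z'(1) g True by (simp add: m_assoc)
    finally show ?thesis using True by simp
  qed (simp add: inner_aut_def)
qed

lemma inner_aut_eq_imp_central:
  assumes x: "x \<in> carrier G" and y: "y \<in> carrier G" and eq: "inner_aut G x = inner_aut G y"
  shows "inv y \<otimes> x \<in> grp_center G"
proof -
  have "inv y \<otimes> x \<otimes> t = t \<otimes> (inv y \<otimes> x)" if t: "t \<in> carrier G" for t
  proof -
    have et: "x \<otimes> t \<otimes> inv x = y \<otimes> t \<otimes> inv y" using fun_cong[OF eq, of t] t by simp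
    have "inv y \<otimes> x \<otimes> t = inv y \<otimes> (x \<otimes> t \<otimes> inv x) \<otimes> x" using x y t by (simp add: m_assoc)
    also have "\<dots> = t \<otimes> (inv y \<otimes> x)" unfolding et using x y t by (simp add: m_assoc)
    finally show ?thesis .
  qed
  then show ?thesis using x y unfolding grp_center_def by simp
qed

text \<open>Such an endomorphism fixes every commutator, and the commutators generate G.\<close>

lemma perfect_hom_fixed_if_inner_aut_eq:
  assumes perfect: "derived G (carrier G) = carrier G" and \<alpha>: "\<alpha> \<in> hom G G"
    and inn: "\<And>g. g \<in> carrier G \<Longrightarrow> inner_aut G (\<alpha> g) = inner_aut G g"
    and g: "g \<in> carrier G"
  shows "\<alpha> g = g"
proof -
  interpret \<alpha>: group_hom G G \<alpha> using \<alpha> by unfold_locales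
  have conj: "\<alpha> x \<otimes> t \<otimes> inv (\<alpha> x) = x \<otimes> t \<otimes> inv x" if "x \<in> carrier G" "t \<in> carrier G" for x t
    using fun_cong[OF inn, of x t] that by simp
  define S where "S = {g \<in> carrier G. \<alpha> g = g}"
  have sub: "subgroup S G" unfolding S_def by (rule subgroupI) auto
  have "derived_set G (carrier G) \<subseteq> S"
  proof
    fix c assume "c \<in> derived_set G (carrier G)"
    then obtain x y where x: "x \<in> carrier G" and y: "y \<in> carrier G"
      and c: "c = x \<otimes> y \<otimes> inv x \<otimes> inv y" by auto
    have "\<alpha> c = \<alpha> x \<otimes> \<alpha> y \<otimes> inv (\<alpha> x) \<otimes> inv (\<alpha> y)" unfolding c using x y by simp
    also have "\<dots> = x \<otimes> (\<alpha> y \<otimes> inv x \<otimes> inv (\<alpha> y))" using conj x y by (simp add: m_assoc)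
    also have "\<dots> = c" unfolding c using conj[of y "inv x"] x y by (simp add: m_assoc)
    finally show "c \<in> S" unfolding S_def c using x y by simp
  qed
  then have "derived G (carrier G) \<subseteq> S"
    unfolding derived_def by (rule generate_subgroup_incl[OF _ sub])
  then show ?thesis using perfect g unfolding S_def by auto
qed

lemma AutoGroup_carrier [simp]: "carrier (AutoGroup G) = auto G"
  unfolding AutoGroup_def by simp

lemma AutoGroup_mult_apply:
  assumes "\<alpha> \<in> auto G" "\<beta> \<in> auto G" "g \<in> carrier G"
  shows "(\<alpha> \<otimes>\<^bsub>AutoGroup G\<^esub> \<beta>) g = \<alpha> (\<beta> g)"
  using assms unfolding AutoGroup_def BijGroup_def auto_def by (simp add: compose_def)

lemma AutoGroup_one_apply: "g \<in> carrier G \<Longrightarrow> \<one>\<^bsub>AutoGroup G\<^esub> g = g"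
  unfolding AutoGroup_def BijGroup_def by simp

lemma autoD:
  assumes "\<alpha> \<in> auto G"
  shows "\<alpha> \<in> hom G G" and "g \<in> carrier G \<Longrightarrow> \<alpha> g \<in> carrier G" and "\<alpha> \<in> extensional (carrier G)"
  using assms unfolding auto_def Bij_def hom_def by auto

lemma AutoGroup_inv_apply:
  assumes \<alpha>: "\<alpha> \<in> auto G" and g: "g \<in> carrier G"
  shows "\<alpha> ((inv\<^bsub>AutoGroup G\<^esub> \<alpha>) g) = g" and "(inv\<^bsub>AutoGroup G\<^esub> \<alpha>) (\<alpha> g) = g"
proof -
  interpret A: group "AutoGroup G" by (rule AutoGroup)
  have \<alpha>': "\<alpha> \<in> carrier (AutoGroup G)" and i: "inv\<^bsub>AutoGroup G\<^esub> \<alpha> \<in> auto G"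
    using \<alpha> A.inv_closed[of \<alpha>] by simp_all
  show "\<alpha> ((inv\<^bsub>AutoGroup G\<^esub> \<alpha>) g) = g"
    using AutoGroup_mult_apply[OF \<alpha> i g] A.r_inv[OF \<alpha>'] g by (simp add: AutoGroup_one_apply)
  show "(inv\<^bsub>AutoGroup G\<^esub> \<alpha>) (\<alpha> g) = g"
    using AutoGroup_mult_apply[OF i \<alpha> g] A.l_inv[OF \<alpha>'] g by (simp add: AutoGroup_one_apply)
qed

lemma AutoGroup_eqI:
  assumes "\<alpha> \<in> auto G" "\<beta> \<in> auto G" "\<And>g. g \<in> carrier G \<Longrightarrow> \<alpha> g = \<beta> g"
  shows "\<alpha> = \<beta>"
  using autoD(3)[OF assms(1)] autoD(3)[OF assms(2)] assms(3) by (rule extensionalityI)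

lemma inner_aut_mult:
  assumes "g \<in> carrier G" "h \<in> carrier G"
  shows "inner_aut G g \<otimes>\<^bsub>AutoGroup G\<^esub> inner_aut G h = inner_aut G (g \<otimes> h)"
proof -
  interpret A: group "AutoGroup G" by (rule AutoGroup)
  show ?thesis
  proof (rule AutoGroup_eqI)
    show "inner_aut G g \<otimes>\<^bsub>AutoGroup G\<^esub> inner_aut G h \<in> auto G"
      using A.m_closed[of "inner_aut G g" "inner_aut G h"] assms inner_aut_auto by simp
    fix y assume "y \<in> carrier G"
    then show "(inner_aut G g \<otimes>\<^bsub>AutoGroup G\<^esub> inner_aut G h) y = inner_aut G (g \<otimes> h) y"
      using assms by (simp add: AutoGroup_mult_apply inner_aut_auto m_assoc inv_mult_group)
  qed (use assms inner_aut_auto in simp)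
qed

lemma inner_aut_conj:
  assumes \<alpha>: "\<alpha> \<in> auto G" and g: "g \<in> carrier G"
  shows "\<alpha> \<otimes>\<^bsub>AutoGroup G\<^esub> inner_aut G g \<otimes>\<^bsub>AutoGroup G\<^esub> inv\<^bsub>AutoGroup G\<^esub> \<alpha> = inner_aut G (\<alpha> g)"
proof -
  interpret A: group "AutoGroup G" by (rule AutoGroup)
  interpret \<alpha>: group_hom G G \<alpha> using autoD(1)[OF \<alpha>] by unfold_locales
  have i: "inv\<^bsub>AutoGroup G\<^esub> \<alpha> \<in> auto G" using \<alpha> A.inv_closed[of \<alpha>] by simp
  have ig: "inner_aut G g \<in> auto G" by (rule inner_aut_auto[OF g])
  show ?thesis
  proof (rule AutoGroup_eqI)
    show "\<alpha> \<otimes>\<^bsub>AutoGroup G\<^esub> inner_aut G g \<otimes>\<^bsub>AutoGroup G\<^esub> inv\<^bsub>AutoGroup G\<^esub> \<alpha> \<in> auto G"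
      using \<alpha> i ig A.m_closed by simp
    show "inner_aut G (\<alpha> g) \<in> auto G" using inner_aut_auto g by simp
    fix y assume y: "y \<in> carrier G"
    have iy: "(inv\<^bsub>AutoGroup G\<^esub> \<alpha>) y \<in> carrier G" using autoD(2)[OF i y] .
    have "(\<alpha> \<otimes>\<^bsub>AutoGroup G\<^esub> inner_aut G g \<otimes>\<^bsub>AutoGroup G\<^esub> inv\<^bsub>AutoGroup G\<^esub> \<alpha>) y
        = \<alpha> (g \<otimes> (inv\<^bsub>AutoGroup G\<^esub> \<alpha>) y \<otimes> inv g)"
      using \<alpha> ig i y iy A.m_closed[of \<alpha> "inner_aut G g"]
      by (simp add: AutoGroup_mult_apply)
    also have "\<dots> = inner_aut G (\<alpha> g) y"
      using g iy y by (simp add: AutoGroup_inv_apply[OF \<alpha> y])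
    finally show "(\<alpha> \<otimes>\<^bsub>AutoGroup G\<^esub> inner_aut G g \<otimes>\<^bsub>AutoGroup G\<^esub> inv\<^bsub>AutoGroup G\<^esub> \<alpha>) y
        = inner_aut G (\<alpha> g) y" .
  qed
qed

lemma aut_stab_carrier: "carrier (aut_stab G \<chi>) = {\<alpha> \<in> auto G. \<forall>g \<in> carrier G. \<chi> (\<alpha> g) = \<chi> g}"
  unfolding aut_stab_def by simp

lemma aut_stab_mult [simp]: "\<alpha> \<otimes>\<^bsub>aut_stab G \<chi>\<^esub> \<beta> = \<alpha> \<otimes>\<^bsub>AutoGroup G\<^esub> \<beta>"
  unfolding aut_stab_def by simp

lemma aut_stab_one [simp]: "\<one>\<^bsub>aut_stab G \<chi>\<^esub> = \<one>\<^bsub>AutoGroup G\<^esub>"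
  unfolding aut_stab_def by simp

lemma aut_stabD:
  assumes "\<alpha> \<in> carrier (aut_stab G \<chi>)"
  shows "\<alpha> \<in> auto G" and "g \<in> carrier G \<Longrightarrow> \<chi> (\<alpha> g) = \<chi> g"
  using assms unfolding aut_stab_carrier by auto

lemma aut_stab_subgroup: "subgroup (carrier (aut_stab G \<chi>)) (AutoGroup G)"
proof -
  interpret A: group "AutoGroup G" by (rule AutoGroup)
  show ?thesis
  proof (rule A.subgroupI)
    show "carrier (aut_stab G \<chi>) \<subseteq> carrier (AutoGroup G)"
      unfolding aut_stab_carrier by auto
    show "carrier (aut_stab G \<chi>) \<noteq> {}"
      using id_in_auto unfolding aut_stab_carrier by auto
  next
    fix \<alpha> assume a: "\<alpha> \<in> carrier (aut_stab G \<chi>)"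
    note a' = aut_stabD[OF a]
    have i: "inv\<^bsub>AutoGroup G\<^esub> \<alpha> \<in> auto G" using a' A.inv_closed[of \<alpha>] by simp
    have "\<chi> ((inv\<^bsub>AutoGroup G\<^esub> \<alpha>) g) = \<chi> g" if g: "g \<in> carrier G" for g
      using a'(2)[OF autoD(2)[OF i g]] AutoGroup_inv_apply(1)[OF a'(1) g] by simp
    then show "inv\<^bsub>AutoGroup G\<^esub> \<alpha> \<in> carrier (aut_stab G \<chi>)" unfolding aut_stab_carrier using i by blast
  next
    fix \<alpha> \<beta> assume a: "\<alpha> \<in> carrier (aut_stab G \<chi>)" and b: "\<beta> \<in> carrier (aut_stab G \<chi>)"
    note a' = aut_stabD[OF a] and b' = aut_stabD[OF b]
    have "\<alpha> \<otimes>\<^bsub>AutoGroup G\<^esub> \<beta> \<in> auto G" using a' b' A.m_closed by simp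
    moreover have "\<chi> ((\<alpha> \<otimes>\<^bsub>AutoGroup G\<^esub> \<beta>) g) = \<chi> g" if g: "g \<in> carrier G" for g
      using a' b' g by (simp add: AutoGroup_mult_apply autoD(2))
    ultimately show "\<alpha> \<otimes>\<^bsub>AutoGroup G\<^esub> \<beta> \<in> carrier (aut_stab G \<chi>)" unfolding aut_stab_carrier by blast
  qed
qed

lemma aut_stab_group: "group (aut_stab G \<chi>)"
proof -
  interpret A: group "AutoGroup G" by (rule AutoGroup)
  have "group ((AutoGroup G)\<lparr>carrier := carrier (aut_stab G \<chi>)\<rparr>)"
    by (rule A.subgroup_imp_group[OF aut_stab_subgroup])
  then show ?thesis unfolding aut_stab_def by simp
qed

lemma aut_stab_inv:
  assumes "\<alpha> \<in> carrier (aut_stab G \<chi>)"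
  shows "inv\<^bsub>aut_stab G \<chi>\<^esub> \<alpha> = inv\<^bsub>AutoGroup G\<^esub> \<alpha>"
proof -
  interpret A: group "AutoGroup G" by (rule AutoGroup)
  show ?thesis using A.m_inv_consistent[OF aut_stab_subgroup assms] unfolding aut_stab_def by simp
qed

lemma finite_aut_stab:
  assumes "finite (carrier G)" shows "finite (carrier (aut_stab G \<chi>))"
proof (rule finite_subset)
  show "carrier (aut_stab G \<chi>) \<subseteq> carrier G \<rightarrow>\<^sub>E carrier G"
  proof
    fix \<alpha> assume "\<alpha> \<in> carrier (aut_stab G \<chi>)"
    then have "\<alpha> \<in> auto G" by (rule aut_stabD)
    then show "\<alpha> \<in> carrier G \<rightarrow>\<^sub>E carrier G"
      using autoD(2,3) by (intro PiE_I) (auto intro: extensional_arb)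
  qed
  show "finite (carrier G \<rightarrow>\<^sub>E carrier G)" by (rule finite_PiE[OF assms assms])
qed

lemma inner_aut_aut_stab:
  assumes class_fun: "\<And>g x. g \<in> carrier G \<Longrightarrow> x \<in> carrier G \<Longrightarrow> \<chi> (g \<otimes> x \<otimes> inv g) = \<chi> x"
    and g: "g \<in> carrier G"
  shows "inner_aut G g \<in> carrier (aut_stab G \<chi>)"
  unfolding aut_stab_carrier using inner_aut_auto[OF g] class_fun g by simp

end

definition transport_group :: "('p \<Rightarrow> 'q) \<Rightarrow> 'p monoid \<Rightarrow> 'q monoid" where
  "transport_group f M = \<lparr>carrier = f ` carrier M,
     monoid.mult = (\<lambda>a b. f (inv_into (carrier M) f a \<otimes>\<^bsub>M\<^esub> inv_into (carrier M) f b)),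
     one = f \<one>\<^bsub>M\<^esub>\<rparr>"

lemma transport_group_iso:
  assumes "monoid M" and "inj_on f (carrier M)"
  shows "f \<in> iso M (transport_group f M)"
  using assms unfolding iso_def hom_def bij_betw_def transport_group_def
  by (auto simp: inv_into_f_f monoid.m_closed)

lemma transport_group_group:
  assumes "group M" and "inj_on f (carrier M)"
  shows "group (transport_group f M)"
proof -
  have "group ((transport_group f M)\<lparr>one := f \<one>\<^bsub>M\<^esub>\<rparr>)"
    using group.iso_imp_img_group[OF assms(1) transport_group_iso[OF group.is_monoid[OF assms(1)] assms(2)]] .
  then show ?thesis by (simp add: transport_group_def)
qed

lemma (in group_hom) the_elem_image_kernel_coset:
  assumes a: "a \<in> carrier G"
  shows "the_elem (h ` (kernel G H h #> a)) = h a"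
proof -
  have "h ` (kernel G H h #> a) \<subseteq> {h a}" using a by (auto simp: kernel_def r_coset_def)
  moreover have "h a \<in> h ` (kernel G H h #> a)"
    using a by (auto simp: kernel_def r_coset_def intro!: image_eqI[where x = "\<one> \<otimes> a"])
  ultimately have "h ` (kernel G H h #> a) = {h a}" by blast
  then show ?thesis by simp
qed

lemma (in group_hom) surj_imp_perfect:
  assumes "h ` carrier G = carrier H" and "derived G (carrier G) = carrier G"
  shows "derived H (carrier H) = carrier H"
  using derived_img[of "carrier G"] assms by simp


section \<open>Universal covering groups\<close>

lemma (in group) center_p_part_subgroup: "subgroup (center_p_part p G) G"
proof (rule subgroupI)
  show "center_p_part p G \<subseteq> carrier G" unfolding center_p_part_def grp_center_def by auto
  have "\<one> \<in> center_p_part p G"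
    unfolding center_p_part_def using subgroup.one_closed[OF grp_center_subgroup] by simp
  then show "center_p_part p G \<noteq> {}" by blast
next
  fix a assume a: "a \<in> center_p_part p G"
  then obtain k where a': "a \<in> grp_center G" "a [^] (p ^ k) = \<one>" unfolding center_p_part_def by auto
  have "inv a [^] (p ^ k) = \<one>" using a'(2) grp_centerD(1)[OF a'(1)] by (simp add: nat_pow_inv)
  then show "inv a \<in> center_p_part p G"
    using subgroup.m_inv_closed[OF grp_center_subgroup a'(1)] unfolding center_p_part_def by auto
next
  fix a b assume a: "a \<in> center_p_part p G" and b: "b \<in> center_p_part p G"
  obtain k where a': "a \<in> grp_center G" "a [^] (p ^ k) = \<one>" using a unfolding center_p_part_def by auto
  obtain l where b': "b \<in> grp_center G" "b [^] (p ^ l) = \<one>" using b unfolding center_p_part_def by auto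
  have ab: "a \<in> carrier G" "b \<in> carrier G" "a \<otimes> b = b \<otimes> a"
    using grp_centerD(1)[OF a'(1)] grp_centerD(1)[OF b'(1)] grp_centerD(2)[OF a'(1)] by blast+
  have "(a \<otimes> b) [^] (p ^ (k + l)) = (a [^] (p ^ k)) [^] (p ^ l) \<otimes> (b [^] (p ^ l)) [^] (p ^ k)"
    using pow_mult_distrib[OF ab(3,1,2)] ab by (simp add: power_add nat_pow_pow mult.commute)
  also have "\<dots> = \<one>" using a' b' by simp
  finally show "a \<otimes> b \<in> center_p_part p G"
    using subgroup.m_closed[OF grp_center_subgroup a'(1) b'(1)] unfolding center_p_part_def by auto
qed

lemma universal_p'_covering_group_finite_perfect:
  assumes G: "group G" and U: "universal_p'_covering_group p G S"
  shows "finite (carrier G)" and "derived G (carrier G) = carrier G"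
proof -
  interpret G: group G by (rule G)
  obtain Y :: "nat monoid" where UY: "universal_covering_group Y S"
    and iso: "G \<cong> Y Mod center_p_part p Y"
    using U unfolding universal_p'_covering_group_def by blast
  have Y: "group Y" and Yperf: "derived Y (carrier Y) = carrier Y" and Yfin: "finite (carrier Y)"
    using UY unfolding universal_covering_group_def perfect_group_def by auto
  interpret Y: group Y by (rule Y)
  let ?P = "center_p_part p Y"
  have "?P \<subseteq> grp_center Y" unfolding center_p_part_def by blast
  then have P: "?P \<lhd> Y" by (rule Y.central_subgroup_normal[OF Y.center_p_part_subgroup])
  obtain f where "f \<in> iso (Y Mod ?P) G" using iso G.iso_set_sym unfolding is_iso_def by blast
  then have f: "f \<in> hom (Y Mod ?P) G" "f ` carrier (Y Mod ?P) = carrier G"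
    unfolding iso_def bij_betw_def by auto
  define h where "h = f \<circ> (\<lambda>a. ?P #>\<^bsub>Y\<^esub> a)"
  have "(\<lambda>a. ?P #>\<^bsub>Y\<^esub> a) ` carrier Y = carrier (Y Mod ?P)"
    unfolding FactGroup_def RCOSETS_def by auto
  then have h_onto: "h ` carrier Y = carrier G" unfolding h_def image_comp[symmetric] using f(2) by simp
  have "group_hom Y G h"
    unfolding group_hom_def group_hom_axioms_def h_def
    using Y G hom_compose[OF normal.r_coset_hom_Mod[OF P] f(1)] by simp
  then show "derived G (carrier G) = carrier G" using h_onto Yperf by (rule group_hom.surj_imp_perfect)
  show "finite (carrier G)" using h_onto Yfin by (metis finite_imageI)
qed


section \<open>Irreducible complex representations of finite groups\<close>

locale irrep = group G for G (structure) +
  fixes n :: nat and \<rho> :: "'a \<Rightarrow> complex mat" and \<chi> :: "'a \<Rightarrow> complex"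
  assumes irreducible: "irreducible_rep G n \<rho>"
    and character: "\<And>g. g \<in> carrier G \<Longrightarrow> \<chi> g = mat_trace (\<rho> g)"
    and finite_carrier: "finite (carrier G)"
begin

lemma rho_carrier [simp]: "g \<in> carrier G \<Longrightarrow> \<rho> g \<in> carrier_mat n n"
  using irreducible unfolding irreducible_rep_def representation_def by auto

lemma rho_mult: "g \<in> carrier G \<Longrightarrow> h \<in> carrier G \<Longrightarrow> \<rho> (g \<otimes> h) = \<rho> g * \<rho> h"
  using irreducible unfolding irreducible_rep_def representation_def by auto

lemma rho_one [simp]: "\<rho> \<one> = 1\<^sub>m n"
  using irreducible unfolding irreducible_rep_def representation_def by auto

lemma dim_pos: "0 < n"
  using irreducible unfolding irreducible_rep_def by auto

lemma card_carrier_pos: "0 < card (carrier G)"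
  using finite_carrier one_closed by (auto simp: card_gt_0_iff)

lemma invariant_subspace_trivial:
  assumes "vec_subspace n W" "\<And>g w. g \<in> carrier G \<Longrightarrow> w \<in> W \<Longrightarrow> \<rho> g *\<^sub>v w \<in> W"
  shows "W = {0\<^sub>v n} \<or> W = carrier_vec n"
  using irreducible assms unfolding irreducible_rep_def by blast

lemma rho_inv_mult [simp]: "g \<in> carrier G \<Longrightarrow> \<rho> (inv g) * \<rho> g = 1\<^sub>m n"
  by (metis inv_closed l_inv rho_mult rho_one)

lemma character_one: "\<chi> \<one> = of_nat n"
  using character[of \<one>] by simp

lemma character_conj: "g \<in> carrier G \<Longrightarrow> x \<in> carrier G \<Longrightarrow> \<chi> (g \<otimes> x \<otimes> inv g) = \<chi> x"
proof -
  assume g: "g \<in> carrier G" and x: "x \<in> carrier G"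
  have "\<chi> (g \<otimes> x \<otimes> inv g) = mat_trace (\<rho> g * \<rho> x * \<rho> (inv g))"
    using g x by (simp add: character rho_mult)
  also have "\<dots> = mat_trace (\<rho> (inv g) * (\<rho> g * \<rho> x))"
    using g x by (intro mat_trace_mult_comm[of _ n]) auto
  also have "\<rho> (inv g) * (\<rho> g * \<rho> x) = \<rho> x"
    using g x by (simp add: rho_mult[symmetric])
  finally show ?thesis using x by (simp add: character)
qed

lemma det_rho_pow_card: assumes x: "x \<in> carrier G" shows "det (\<rho> x) ^ card (carrier G) = 1"
proof -
  have "det (\<rho> (x [^] k)) = det (\<rho> x) ^ k" for k :: nat
    by (induction k) (use x in \<open>simp_all add: rho_mult det_mult[of _ n]\<close>)
  moreover have "x [^] card (carrier G) = \<one>"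
    using pow_order_eq_1[OF x] by (simp add: Coset.order_def)
  ultimately show ?thesis by (metis det_one rho_one)
qed

lemma schur:
  assumes T: "T \<in> carrier_mat n n" and comm: "\<And>g. g \<in> carrier G \<Longrightarrow> T * \<rho> g = \<rho> g * T"
  shows "\<exists>c. T = c \<cdot>\<^sub>m 1\<^sub>m n"
proof -
  from spectrum_non_empty[OF T dim_pos] obtain c where "eigenvalue T c"
    unfolding spectrum_def by auto
  then obtain v where v: "v \<in> carrier_vec n" "v \<noteq> 0\<^sub>v n" "T *\<^sub>v v = c \<cdot>\<^sub>v v"
    unfolding eigenvalue_def eigenvector_def using T by auto
  define W where "W = {w \<in> carrier_vec n. T *\<^sub>v w = c \<cdot>\<^sub>v w}"
  have "vec_subspace n W"
    unfolding vec_subspace_def W_def using T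
    by (auto simp: mult_add_distrib_mat_vec smult_add_distrib_vec mult_mat_vec smult_smult_assoc mult.commute)
  moreover have "\<rho> g *\<^sub>v w \<in> W" if g: "g \<in> carrier G" and w: "w \<in> W" for g w
  proof -
    have wc: "w \<in> carrier_vec n" "T *\<^sub>v w = c \<cdot>\<^sub>v w" using w unfolding W_def by auto
    have "T *\<^sub>v (\<rho> g *\<^sub>v w) = (T * \<rho> g) *\<^sub>v w"
      by (rule assoc_mult_mat_vec[of _ n n, symmetric]) (use T g wc in auto)
    also have "\<dots> = \<rho> g *\<^sub>v (T *\<^sub>v w)"
      unfolding comm[OF g] by (rule assoc_mult_mat_vec[of _ n n]) (use T g wc in auto)
    also have "\<dots> = c \<cdot>\<^sub>v (\<rho> g *\<^sub>v w)"
      unfolding wc(2) by (rule mult_mat_vec[of _ n n]) (use g wc in auto)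
    finally show ?thesis unfolding W_def using mult_mat_vec_carrier[OF rho_carrier[OF g] wc(1)] by simp
  qed
  ultimately have "W = carrier_vec n" using invariant_subspace_trivial v unfolding W_def by blast
  then have "T = c \<cdot>\<^sub>m 1\<^sub>m n" using T by (intro mat_eq_smult_one_by_vec) (auto simp: W_def)
  then show ?thesis by blast
qed

lemma central_rho_scalar:
  assumes "z \<in> grp_center G" shows "\<exists>c. \<rho> z = c \<cdot>\<^sub>m 1\<^sub>m n"
  using grp_centerD[OF assms] by (intro schur) (auto simp: rho_mult[symmetric])

lemma central_char_kernel_iff:
  assumes z: "z \<in> grp_center G" shows "\<chi> z = \<chi> \<one> \<longleftrightarrow> \<rho> z = 1\<^sub>m n"
proof
  assume "\<chi> z = \<chi> \<one>"
  moreover obtain c where c: "\<rho> z = c \<cdot>\<^sub>m 1\<^sub>m n" using central_rho_scalar[OF z] by blast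
  ultimately have "c * of_nat n = of_nat n" using character grp_centerD(1)[OF z] character_one by simp
  then show "\<rho> z = 1\<^sub>m n" using c dim_pos by simp
qed (use character grp_centerD(1)[OF z] character_one in simp)

lemma intertwiner_unique_up_to_scalar:
  assumes M0: "M0 \<in> carrier_mat n n" "det M0 \<noteq> 0" and M: "M \<in> carrier_mat n n"
    and \<sigma>: "\<And>g. g \<in> carrier G \<Longrightarrow> \<sigma> g \<in> carrier_mat n n"
    and M0_int: "\<And>g. g \<in> carrier G \<Longrightarrow> M0 * \<rho> g = \<sigma> g * M0"
    and M_int: "\<And>g. g \<in> carrier G \<Longrightarrow> M * \<rho> g = \<sigma> g * M"
  shows "\<exists>c. M = c \<cdot>\<^sub>m M0"
proof -
  obtain B where B: "B \<in> carrier_mat n n" "M0 * B = 1\<^sub>m n" "B * M0 = 1\<^sub>m n"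
    using det_nonzero_imp_inverse[OF M0] by blast
  have B_int: "B * \<sigma> g = \<rho> g * B" if g: "g \<in> carrier G" for g
  proof -
    have "\<rho> g * B = (B * M0) * \<rho> g * B" using B g by simp
    also have "\<dots> = B * (M0 * \<rho> g) * B" using B(1) M0 g by (simp add: assoc_mult_mat[of _ n n _ n _ n])
    also have "\<dots> = B * \<sigma> g * (M0 * B)"
      unfolding M0_int[OF g] using B(1) M0 \<sigma>[OF g] by (simp add: assoc_mult_mat[of _ n n _ n _ n])
    finally show ?thesis using B \<sigma>[OF g] by simp
  qed
  have "B * M * \<rho> g = \<rho> g * (B * M)" if g: "g \<in> carrier G" for g
  proof -
    have "B * M * \<rho> g = B * (\<sigma> g * M)"
      unfolding M_int[OF g, symmetric] using B M g by (simp add: assoc_mult_mat[of _ n n _ n _ n])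
    also have "\<dots> = \<rho> g * B * M"
      unfolding B_int[OF g, symmetric] using B M \<sigma>[OF g] by (simp add: assoc_mult_mat[of _ n n _ n _ n])
    finally show ?thesis using B M g by (simp add: assoc_mult_mat[of _ n n _ n _ n])
  qed
  then obtain c where c: "B * M = c \<cdot>\<^sub>m 1\<^sub>m n" using schur[of "B * M"] B M by auto
  have "M = M0 * (B * M)" using B M M0 by (simp add: assoc_mult_mat[symmetric, of _ n n _ n _ n])
  also have "\<dots> = c \<cdot>\<^sub>m M0" unfolding c using M0 by (simp add: mult_smult_distrib[of _ n n _ n])
  finally show ?thesis by blast
qed


lemma representation_self: "representation G n \<rho>"
  using irreducible unfolding irreducible_rep_def by blast

lemma representation_twist:
  assumes "\<alpha> \<in> hom G G" shows "representation G n (\<lambda>g. \<rho> (\<alpha> g))"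
proof -
  interpret \<alpha>: group_hom G G \<alpha> using assms by unfold_locales
  show ?thesis unfolding representation_def by (simp add: rho_mult)
qed

lemma rho_kernel_subgroup: "subgroup {g \<in> carrier G. \<rho> g = 1\<^sub>m n} G"
proof (rule subgroupI)
  fix g assume "g \<in> {g \<in> carrier G. \<rho> g = 1\<^sub>m n}"
  then show "inv g \<in> {g \<in> carrier G. \<rho> g = 1\<^sub>m n}"
    using rho_inv_mult[of g] rho_carrier[of "inv g"] by simp
qed (auto simp: rho_mult)


definition rep_average :: "('a \<Rightarrow> complex mat) \<Rightarrow> complex mat \<Rightarrow> complex mat" where
  "rep_average \<sigma> X = mat_sum n (\<lambda>h. \<sigma> h * X * \<rho> (inv h)) (carrier G)"

lemma rep_average_carrier [simp]: "rep_average \<sigma> X \<in> carrier_mat n n"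
  unfolding rep_average_def by simp

lemma rep_average_intertwines:
  assumes \<sigma>: "representation G n \<sigma>" and X: "X \<in> carrier_mat n n" and g: "g \<in> carrier G"
  shows "rep_average \<sigma> X * \<rho> g = \<sigma> g * rep_average \<sigma> X"
proof -
  have \<sigma>c: "\<And>h. h \<in> carrier G \<Longrightarrow> \<sigma> h \<in> carrier_mat n n"
    and \<sigma>m: "\<And>h k. h \<in> carrier G \<Longrightarrow> k \<in> carrier G \<Longrightarrow> \<sigma> (h \<otimes> k) = \<sigma> h * \<sigma> k"
    using \<sigma> unfolding representation_def by auto
  have shift: "bij_betw (\<lambda>k. g \<otimes> k) (carrier G) (carrier G)"
    using g by (intro bij_betwI[where g = "\<lambda>k. inv g \<otimes> k"]) auto
  have "rep_average \<sigma> X * \<rho> g = mat_sum n (\<lambda>h. \<sigma> h * X * \<rho> (inv h \<otimes> g)) (carrier G)"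
    unfolding rep_average_def using \<sigma>c X g
    by (subst mat_sum_mult_right) (auto intro!: mat_sum_cong simp: rho_mult assoc_mult_mat[of _ n n _ n _ n])
  also have "\<dots> = mat_sum n (\<lambda>k. \<sigma> (g \<otimes> k) * X * \<rho> (inv (g \<otimes> k) \<otimes> g)) (carrier G)"
    by (rule mat_sum_reindex[OF shift])
  also have "\<dots> = mat_sum n (\<lambda>k. \<sigma> g * (\<sigma> k * X * \<rho> (inv k))) (carrier G)"
    using g \<sigma>c X
    by (intro mat_sum_cong) (simp add: \<sigma>m inv_mult_group m_assoc assoc_mult_mat[of _ n n _ n _ n])
  also have "\<dots> = \<sigma> g * rep_average \<sigma> X"
    unfolding rep_average_def using \<sigma>c X g by (intro mat_sum_mult_left[symmetric]) auto
  finally show ?thesis .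
qed

lemma rep_average_elem_mat_diag_sum:
  assumes \<sigma>: "representation G n \<sigma>"
  shows "(\<Sum>k<n. \<Sum>i<n. rep_average \<sigma> (elem_mat n k i) $$ (k, i))
       = (\<Sum>h\<in>carrier G. mat_trace (\<sigma> h) * mat_trace (\<rho> (inv h)))"
proof -
  have \<sigma>c: "\<And>h. h \<in> carrier G \<Longrightarrow> \<sigma> h \<in> carrier_mat n n"
    using \<sigma> unfolding representation_def by auto
  have "(\<Sum>k<n. \<Sum>i<n. rep_average \<sigma> (elem_mat n k i) $$ (k, i))
      = (\<Sum>k<n. \<Sum>i<n. \<Sum>h\<in>carrier G. \<sigma> h $$ (k, k) * \<rho> (inv h) $$ (i, i))"
    unfolding rep_average_def using \<sigma>c
    by (intro sum.cong refl) (simp add: mat_sum_index elem_mat_sandwich_entry)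
  also have "\<dots> = (\<Sum>h\<in>carrier G. \<Sum>k<n. \<Sum>i<n. \<sigma> h $$ (k, k) * \<rho> (inv h) $$ (i, i))"
    by (subst sum.swap) (intro sum.cong refl sum.swap)
  also have "\<dots> = (\<Sum>h\<in>carrier G. (\<Sum>k<n. \<sigma> h $$ (k, k)) * (\<Sum>i<n. \<rho> (inv h) $$ (i, i)))"
    by (simp only: sum_product)
  also have "\<dots> = (\<Sum>h\<in>carrier G. mat_trace (\<sigma> h) * mat_trace (\<rho> (inv h)))"
  proof (intro sum.cong refl)
    fix h assume h: "h \<in> carrier G"
    then have "dim_row (\<sigma> h) = n" "dim_row (\<rho> (inv h)) = n"
      using carrier_matD(1)[OF \<sigma>c[OF h]] carrier_matD(1)[OF rho_carrier[OF inv_closed[OF h]]] by auto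
    then show "(\<Sum>k<n. \<sigma> h $$ (k, k)) * (\<Sum>i<n. \<rho> (inv h) $$ (i, i))
        = mat_trace (\<sigma> h) * mat_trace (\<rho> (inv h))" unfolding mat_trace_def by simp
  qed
  finally show ?thesis .
qed

lemma rep_average_self:
  assumes X: "X \<in> carrier_mat n n"
  shows "rep_average \<rho> X = (of_nat (card (carrier G)) * mat_trace X / of_nat n) \<cdot>\<^sub>m 1\<^sub>m n"
proof -
  obtain c where c: "rep_average \<rho> X = c \<cdot>\<^sub>m 1\<^sub>m n"
    using schur[OF rep_average_carrier] rep_average_intertwines[OF representation_self X] by blast
  have "mat_trace (rep_average \<rho> X) = (\<Sum>h\<in>carrier G. mat_trace (\<rho> (inv h) * (\<rho> h * X)))"
    unfolding rep_average_def using X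
    by (subst mat_trace_mat_sum) (auto intro!: sum.cong mat_trace_mult_comm[of _ n])
  also have "\<dots> = of_nat (card (carrier G)) * mat_trace X"
    using X by (simp add: assoc_mult_mat[symmetric, of _ n n _ n _ n])
  finally have "c * of_nat n = of_nat (card (carrier G)) * mat_trace X" using c by simp
  then have "c = of_nat (card (carrier G)) * mat_trace X / of_nat n" using dim_pos by (simp add: field_simps)
  then show ?thesis using c by simp
qed

lemma character_norm: "(\<Sum>h\<in>carrier G. \<chi> h * \<chi> (inv h)) = of_nat (card (carrier G))"
proof -
  have "(\<Sum>h\<in>carrier G. \<chi> h * \<chi> (inv h))
      = (\<Sum>k<n. \<Sum>i<n. rep_average \<rho> (elem_mat n k i) $$ (k, i))"
    by (simp add: rep_average_elem_mat_diag_sum[OF representation_self] character)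
  also have "\<dots> = (\<Sum>k<n. of_nat (card (carrier G)) / of_nat n)"
    by (intro sum.cong refl) (simp add: rep_average_self mat_trace_elem_mat if_distrib sum.delta cong: if_cong)
  also have "\<dots> = of_nat (card (carrier G))" using dim_pos by simp
  finally show ?thesis .
qed

lemma intertwiner_nonzero_imp_invertible:
  assumes M: "M \<in> carrier_mat n n" "M \<noteq> 0\<^sub>m n n"
    and \<sigma>: "\<And>g. g \<in> carrier G \<Longrightarrow> \<sigma> g \<in> carrier_mat n n"
    and M_int: "\<And>g. g \<in> carrier G \<Longrightarrow> M * \<rho> g = \<sigma> g * M"
  shows "det M \<noteq> 0"
proof
  define K where "K = {v \<in> carrier_vec n. M *\<^sub>v v = 0\<^sub>v n}"
  have "vec_subspace n K"
    unfolding vec_subspace_def K_def using M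
    by (auto simp: mult_add_distrib_mat_vec mult_mat_vec)
  moreover have "\<rho> g *\<^sub>v w \<in> K" if g: "g \<in> carrier G" and w: "w \<in> K" for g w
  proof -
    have wc: "w \<in> carrier_vec n" "M *\<^sub>v w = 0\<^sub>v n" using w unfolding K_def by auto
    have "M *\<^sub>v (\<rho> g *\<^sub>v w) = (M * \<rho> g) *\<^sub>v w"
      by (rule assoc_mult_mat_vec[of _ n n, symmetric]) (use M g wc in auto)
    also have "\<dots> = \<sigma> g *\<^sub>v (M *\<^sub>v w)"
      unfolding M_int[OF g] by (rule assoc_mult_mat_vec[of _ n n]) (use M \<sigma> g wc in auto)
    finally show ?thesis
      unfolding K_def using wc \<sigma>[OF g] mult_mat_vec_carrier[OF rho_carrier[OF g] wc(1)] by auto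
  qed
  ultimately have K: "K = {0\<^sub>v n} \<or> K = carrier_vec n" by (rule invariant_subspace_trivial)
  assume "det M = 0"
  then obtain v where v: "v \<in> carrier_vec n" "v \<noteq> 0\<^sub>v n" "M *\<^sub>v v = 0\<^sub>v n"
    using det_0_iff_vec_prod_zero[OF M(1)] by auto
  then have "K = carrier_vec n" using K unfolding K_def by auto
  then have "M *\<^sub>v v = 0 \<cdot>\<^sub>v v" if "v \<in> carrier_vec n" for v
  proof -
    have "M *\<^sub>v v = 0\<^sub>v n" using \<open>K = carrier_vec n\<close> that unfolding K_def by blast
    then show ?thesis using that by (auto intro!: eq_vecI)
  qed
  then have "M = 0 \<cdot>\<^sub>m 1\<^sub>m n" using M by (intro mat_eq_smult_one_by_vec)
  moreover have "0 \<cdot>\<^sub>m 1\<^sub>m n = (0\<^sub>m n n :: complex mat)" by (intro eq_matI) auto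
  ultimately show False using M(2) by simp
qed

text \<open>The averaged intertwiners cannot all vanish: their diagonal entries add up to the inner
  product of the characters.\<close>

lemma similar_if_same_character:
  assumes \<sigma>: "representation G n \<sigma>" and same: "\<And>g. g \<in> carrier G \<Longrightarrow> mat_trace (\<sigma> g) = \<chi> g"
  shows "\<exists>M \<in> carrier_mat n n. det M \<noteq> 0 \<and> (\<forall>g \<in> carrier G. M * \<rho> g = \<sigma> g * M)"
proof -
  have \<sigma>c: "\<And>g. g \<in> carrier G \<Longrightarrow> \<sigma> g \<in> carrier_mat n n"
    using \<sigma> unfolding representation_def by auto
  have diag: "(\<Sum>k<n. \<Sum>i<n. rep_average \<sigma> (elem_mat n k i) $$ (k, i)) = of_nat (card (carrier G))"
    using rep_average_elem_mat_diag_sum[OF \<sigma>] character_norm by (simp add: same character)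
  have "\<exists>k<n. \<exists>i<n. rep_average \<sigma> (elem_mat n k i) $$ (k, i) \<noteq> 0"
  proof (rule ccontr)
    assume "\<not> ?thesis"
    then have "(\<Sum>k<n. \<Sum>i<n. rep_average \<sigma> (elem_mat n k i) $$ (k, i)) = 0"
      by (auto intro!: sum.neutral)
    then show False using diag card_carrier_pos by simp
  qed
  then obtain k i where ki: "k < n" "i < n" and nz: "rep_average \<sigma> (elem_mat n k i) $$ (k, i) \<noteq> 0"
    by blast
  define M where "M = rep_average \<sigma> (elem_mat n k i)"
  have M: "M \<in> carrier_mat n n" "M \<noteq> 0\<^sub>m n n" using nz ki unfolding M_def by auto
  have M_int: "M * \<rho> g = \<sigma> g * M" if "g \<in> carrier G" for g
    unfolding M_def using rep_average_intertwines[OF \<sigma> elem_mat_carrier that] .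
  then show ?thesis using intertwiner_nonzero_imp_invertible[OF M \<sigma>c M_int] M by blast
qed

end

section \<open>Lifting the stabiliser of the character to matrices\<close>

context irrep
begin

text \<open>By Schur's
  lemma M is unique up to a scalar; normalising det M ^ |G| = 1 leaves finitely many choices
  and still admits \<rho> g itself, for \<alpha> the inner automorphism of g.\<close>

definition lift_pairs :: "(('a \<Rightarrow> 'a) \<times> complex mat) set" where
  "lift_pairs = {(\<alpha>, M). \<alpha> \<in> carrier (aut_stab G \<chi>) \<and> M \<in> carrier_mat n n \<and>
     (\<forall>g \<in> carrier G. M * \<rho> g = \<rho> (\<alpha> g) * M) \<and> det M ^ card (carrier G) = 1}"

definition lift_group :: "(('a \<Rightarrow> 'a) \<times> complex mat) monoid" where
  "lift_group = \<lparr>carrier = lift_pairs,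
     monoid.mult = (\<lambda>(\<alpha>, M) (\<beta>, L). (\<alpha> \<otimes>\<^bsub>AutoGroup G\<^esub> \<beta>, M * L)),
     one = (\<one>\<^bsub>AutoGroup G\<^esub>, 1\<^sub>m n)\<rparr>"

lemma lift_pairs_iff:
  "(\<alpha>, M) \<in> lift_pairs \<longleftrightarrow> \<alpha> \<in> carrier (aut_stab G \<chi>) \<and> M \<in> carrier_mat n n \<and>
     (\<forall>g \<in> carrier G. M * \<rho> g = \<rho> (\<alpha> g) * M) \<and> det M ^ card (carrier G) = 1"
  unfolding lift_pairs_def by simp

lemma lift_group_carrier [simp]: "carrier lift_group = lift_pairs"
  unfolding lift_group_def by simp

lemma lift_group_mult [simp]:
  "(\<alpha>, M) \<otimes>\<^bsub>lift_group\<^esub> (\<beta>, L) = (\<alpha> \<otimes>\<^bsub>AutoGroup G\<^esub> \<beta>, M * L)"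
  unfolding lift_group_def by simp

lemma lift_group_one [simp]: "\<one>\<^bsub>lift_group\<^esub> = (\<one>\<^bsub>AutoGroup G\<^esub>, 1\<^sub>m n)"
  unfolding lift_group_def by simp

lemma lift_pairsD:
  assumes "(\<alpha>, M) \<in> lift_pairs"
  shows "\<alpha> \<in> auto G" "M \<in> carrier_mat n n" "\<And>g. g \<in> carrier G \<Longrightarrow> M * \<rho> g = \<rho> (\<alpha> g) * M"
    "det M \<noteq> 0"
  using assms card_carrier_pos aut_stabD(1) unfolding lift_pairs_iff by (auto simp: zero_power)

lemma lift_pairs_memD:
  "p \<in> lift_pairs \<Longrightarrow> fst p \<in> carrier (aut_stab G \<chi>) \<and> snd p \<in> carrier_mat n n"
  by (cases p) (simp add: lift_pairs_iff)

lemma lift_pairs_mult_closed: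
  assumes p: "(\<alpha>, M) \<in> lift_pairs" and q: "(\<beta>, L) \<in> lift_pairs"
  shows "(\<alpha> \<otimes>\<^bsub>AutoGroup G\<^esub> \<beta>, M * L) \<in> lift_pairs"
proof -
  interpret S: group "aut_stab G \<chi>" by (rule aut_stab_group)
  note p' = lift_pairsD[OF p] and q' = lift_pairsD[OF q]
  have "M * L * \<rho> g = \<rho> ((\<alpha> \<otimes>\<^bsub>AutoGroup G\<^esub> \<beta>) g) * (M * L)" if g: "g \<in> carrier G" for g
  proof -
    have \<beta>g: "\<beta> g \<in> carrier G" using autoD(2)[OF q'(1) g] .
    have "M * L * \<rho> g = M * (\<rho> (\<beta> g) * L)"
      using p'(2) q'(2) g by (simp add: assoc_mult_mat[of _ n n _ n _ n] q'(3))
    also have "\<dots> = (\<rho> (\<alpha> (\<beta> g)) * M) * L"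
      using p'(2) q'(2) \<beta>g by (simp add: assoc_mult_mat[symmetric, of _ n n _ n _ n] p'(3))
    also have "\<dots> = \<rho> (\<alpha> (\<beta> g)) * (M * L)"
      using p'(2) q'(2) autoD(2)[OF p'(1) \<beta>g] by (simp add: assoc_mult_mat[of _ n n _ n _ n])
    finally show ?thesis using p' q' g by (simp add: AutoGroup_mult_apply)
  qed
  moreover have "\<alpha> \<otimes>\<^bsub>AutoGroup G\<^esub> \<beta> \<in> carrier (aut_stab G \<chi>)"
    using p q S.m_closed unfolding lift_pairs_iff by simp
  ultimately show ?thesis
    using p q p' q' unfolding lift_pairs_iff by (simp add: det_mult[of _ n] power_mult_distrib)
qed

lemma lift_pairs_inverse:
  assumes p: "(\<alpha>, M) \<in> lift_pairs" and B: "B \<in> carrier_mat n n" "M * B = 1\<^sub>m n" "B * M = 1\<^sub>m n"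
  shows "(inv\<^bsub>AutoGroup G\<^esub> \<alpha>, B) \<in> lift_pairs"
proof -
  interpret S: group "aut_stab G \<chi>" by (rule aut_stab_group)
  note p' = lift_pairsD[OF p]
  have \<alpha>: "\<alpha> \<in> carrier (aut_stab G \<chi>)" using p unfolding lift_pairs_iff by simp
  have "B * \<rho> g = \<rho> ((inv\<^bsub>AutoGroup G\<^esub> \<alpha>) g) * B" if g: "g \<in> carrier G" for g
  proof -
    define y where "y = (inv\<^bsub>AutoGroup G\<^esub> \<alpha>) g"
    have y: "y \<in> carrier G" "\<alpha> y = g"
      unfolding y_def using AutoGroup_inv_apply(1)[OF p'(1) g] S.inv_closed[OF \<alpha>] aut_stabD(1) autoD(2) g
      by (auto simp: aut_stab_inv[OF \<alpha>])
    have "\<rho> y * B = (B * M) * (\<rho> y * B)" using B y by simp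
    also have "\<dots> = B * (M * \<rho> y) * B" using B(1) p'(2) y by (simp add: assoc_mult_mat[of _ n n _ n _ n])
    also have "\<dots> = B * \<rho> g * (M * B)"
      using B(1) p' y g by (simp add: assoc_mult_mat[of _ n n _ n _ n])
    finally show ?thesis using B g unfolding y_def by simp
  qed
  moreover have "(det B * det M) ^ card (carrier G) = 1" using B p' by (simp add: det_mult[symmetric, of _ n])
  ultimately show ?thesis
    using p B S.inv_closed[OF \<alpha>] aut_stab_inv[OF \<alpha>] unfolding lift_pairs_iff by (simp add: power_mult_distrib)
qed

lemma lift_group_group: "group lift_group"
proof -
  interpret A: group "AutoGroup G" by (rule AutoGroup)
  show ?thesis
  proof (rule groupI)
    show "\<one>\<^bsub>lift_group\<^esub> \<in> carrier lift_group"
      using id_in_auto by (auto simp: lift_pairs_iff aut_stab_carrier AutoGroup_def BijGroup_def)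
  next
    fix x y assume "x \<in> carrier lift_group" "y \<in> carrier lift_group"
    then show "x \<otimes>\<^bsub>lift_group\<^esub> y \<in> carrier lift_group"
      using lift_pairs_mult_closed by (cases x, cases y) auto
  next
    fix x y z assume "x \<in> carrier lift_group" "y \<in> carrier lift_group" "z \<in> carrier lift_group"
    then show "x \<otimes>\<^bsub>lift_group\<^esub> y \<otimes>\<^bsub>lift_group\<^esub> z = x \<otimes>\<^bsub>lift_group\<^esub> (y \<otimes>\<^bsub>lift_group\<^esub> z)"
      using lift_pairsD(1,2) by (cases x, cases y, cases z) (simp add: A.m_assoc assoc_mult_mat[of _ n n _ n _ n])
  next
    fix x assume "x \<in> carrier lift_group"
    then show "\<one>\<^bsub>lift_group\<^esub> \<otimes>\<^bsub>lift_group\<^esub> x = x"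
      using lift_pairsD(1,2) by (cases x) simp
  next
    fix x assume x: "x \<in> carrier lift_group"
    obtain \<alpha> M where x_eq: "x = (\<alpha>, M)" by (cases x)
    note p' = lift_pairsD[OF x[unfolded x_eq lift_group_carrier]]
    obtain B where B: "B \<in> carrier_mat n n" "M * B = 1\<^sub>m n" "B * M = 1\<^sub>m n"
      using det_nonzero_imp_inverse[OF p'(2,4)] by blast
    have "(inv\<^bsub>AutoGroup G\<^esub> \<alpha>, B) \<in> carrier lift_group"
      using lift_pairs_inverse x B unfolding x_eq by simp
    moreover have "(inv\<^bsub>AutoGroup G\<^esub> \<alpha>, B) \<otimes>\<^bsub>lift_group\<^esub> x = \<one>\<^bsub>lift_group\<^esub>"
      using p'(1) B A.l_inv[of \<alpha>] unfolding x_eq by simp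
    ultimately show "\<exists>y \<in> carrier lift_group. y \<otimes>\<^bsub>lift_group\<^esub> x = \<one>\<^bsub>lift_group\<^esub>" by blast
  qed
qed

lemma lift_group_inv:
  assumes p: "(\<alpha>, M) \<in> lift_pairs" and B: "B \<in> carrier_mat n n" "M * B = 1\<^sub>m n" "B * M = 1\<^sub>m n"
  shows "inv\<^bsub>lift_group\<^esub> (\<alpha>, M) = (inv\<^bsub>AutoGroup G\<^esub> \<alpha>, B)"
proof -
  interpret A: group "AutoGroup G" by (rule AutoGroup)
  interpret L: group lift_group by (rule lift_group_group)
  show ?thesis
    using lift_pairs_inverse[OF p B] p B lift_pairsD(1)[OF p] A.l_inv[of \<alpha>]
    by (intro L.inv_equality) simp_all
qed

lemma lift_pairs_exist:
  assumes \<alpha>: "\<alpha> \<in> carrier (aut_stab G \<chi>)" shows "\<exists>M. (\<alpha>, M) \<in> lift_pairs"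
proof -
  note \<alpha>' = aut_stabD[OF \<alpha>]
  obtain M where M: "M \<in> carrier_mat n n" "det M \<noteq> 0" and M_int: "\<forall>g \<in> carrier G. M * \<rho> g = \<rho> (\<alpha> g) * M"
    using similar_if_same_character[OF representation_twist[OF autoD(1)[OF \<alpha>'(1)]]]
      \<alpha>'(2) autoD(2)[OF \<alpha>'(1)] character by auto
  obtain c where c: "c ^ n = inverse (det M)" using complex_nth_root_exists[OF dim_pos] by blast
  have "(c \<cdot>\<^sub>m M) * \<rho> g = \<rho> (\<alpha> g) * (c \<cdot>\<^sub>m M)" if g: "g \<in> carrier G" for g
    using M M_int g autoD(2)[OF \<alpha>'(1) g]
    by (simp add: mult_smult_assoc_mat[of _ n n _ n] mult_smult_distrib[of _ n n _ n])
  moreover have "det (c \<cdot>\<^sub>m M) = 1" using M c by simp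
  ultimately have "(\<alpha>, c \<cdot>\<^sub>m M) \<in> lift_pairs" using \<alpha> M unfolding lift_pairs_iff by simp
  then show ?thesis by blast
qed

lemma finite_lift_pairs: "finite lift_pairs"
proof -
  define lift where "lift \<alpha> = (SOME M. (\<alpha>, M) \<in> lift_pairs)" for \<alpha>
  define R where "R = {c::complex. c ^ (n * card (carrier G)) = 1}"
  have "finite R" unfolding R_def
    by (rule finite_roots_unity) (use dim_pos card_carrier_pos in simp)
  moreover have "lift_pairs \<subseteq> (\<Union>\<alpha> \<in> carrier (aut_stab G \<chi>). {\<alpha>} \<times> (\<lambda>c. c \<cdot>\<^sub>m lift \<alpha>) ` R)"
  proof clarify
    fix \<alpha> M assume p: "(\<alpha>, M) \<in> lift_pairs"
    have \<alpha>: "\<alpha> \<in> carrier (aut_stab G \<chi>)" using p unfolding lift_pairs_iff by simp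
    have p0: "(\<alpha>, lift \<alpha>) \<in> lift_pairs" unfolding lift_def using p by (rule someI)
    note p' = lift_pairsD[OF p] and p0' = lift_pairsD[OF p0]
    obtain c where c: "M = c \<cdot>\<^sub>m lift \<alpha>"
      using intertwiner_unique_up_to_scalar[OF p0'(2,4) p'(2), of "\<lambda>g. \<rho> (\<alpha> g)"]
        p' p0' autoD(2)[OF p'(1)] by auto
    have "det M ^ card (carrier G) = c ^ (n * card (carrier G)) * det (lift \<alpha>) ^ card (carrier G)"
      using p0'(2) unfolding c by (simp add: power_mult_distrib power_mult)
    then have "c \<in> R" using p p0 unfolding R_def lift_pairs_iff by simp
    then show "(\<alpha>, M) \<in> (\<Union>\<alpha> \<in> carrier (aut_stab G \<chi>). {\<alpha>} \<times> (\<lambda>c. c \<cdot>\<^sub>m lift \<alpha>) ` R)"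
      using \<alpha> c by blast
  qed
  ultimately show ?thesis using finite_aut_stab[OF finite_carrier] by (auto intro: finite_subset)
qed

lemma inner_aut_lift_pair: assumes g: "g \<in> carrier G" shows "(inner_aut G g, \<rho> g) \<in> lift_pairs"
proof -
  have "\<rho> g * \<rho> x = \<rho> (inner_aut G g x) * \<rho> g" if x: "x \<in> carrier G" for x
    using g x by (simp add: rho_mult[symmetric] m_assoc)
  then show ?thesis unfolding lift_pairs_iff
    using inner_aut_aut_stab[OF character_conj g] det_rho_pow_card[OF g] g by simp
qed

lemma lift_group_conj_inner_aut:
  assumes p: "(\<alpha>, M) \<in> lift_pairs" and g: "g \<in> carrier G"
  shows "(\<alpha>, M) \<otimes>\<^bsub>lift_group\<^esub> (inner_aut G g, \<rho> g) \<otimes>\<^bsub>lift_group\<^esub> inv\<^bsub>lift_group\<^esub> (\<alpha>, M)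
    = (inner_aut G (\<alpha> g), \<rho> (\<alpha> g))"
proof -
  note p' = lift_pairsD[OF p]
  obtain B where B: "B \<in> carrier_mat n n" "M * B = 1\<^sub>m n" "B * M = 1\<^sub>m n"
    using det_nonzero_imp_inverse[OF p'(2,4)] by blast
  have \<alpha>g: "\<alpha> g \<in> carrier G" using autoD(2)[OF p'(1) g] .
  have "M * \<rho> g * B = \<rho> (\<alpha> g) * (M * B)"
    using p'(2,3) B(1) g \<alpha>g by (simp add: assoc_mult_mat[of _ n n _ n _ n])
  then show ?thesis
    using lift_group_inv[OF p B] inner_aut_conj[OF p'(1) g] B(2) \<alpha>g by simp
qed

end


section \<open>The extension group\<close>

context irrep
begin

text \<open>The statement asks for a group on the naturals, so the group of lifts is transported along an
  injective coding of its finite carrier.\<close>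

definition lift_code :: "('a \<Rightarrow> 'a) \<times> complex mat \<Rightarrow> nat" where
  "lift_code = to_nat_on lift_pairs"

definition lift_decode :: "nat \<Rightarrow> ('a \<Rightarrow> 'a) \<times> complex mat" where
  "lift_decode = inv_into lift_pairs lift_code"

definition ext_group :: "nat monoid" where
  "ext_group = transport_group lift_code lift_group"

lemma inj_on_lift_code: "inj_on lift_code lift_pairs"
  unfolding lift_code_def using finite_lift_pairs by (intro inj_on_to_nat_on countable_finite)

lemma ext_group_group: "group ext_group"
  unfolding ext_group_def using lift_group_group inj_on_lift_code
  by (intro transport_group_group) simp_all

lemma lift_code_hom: "group_hom lift_group ext_group lift_code"
proof -
  have "lift_code \<in> iso lift_group ext_group"
    unfolding ext_group_def using group.is_monoid[OF lift_group_group] inj_on_lift_code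
    by (intro transport_group_iso) simp_all
  then show ?thesis
    using lift_group_group ext_group_group unfolding group_hom_def group_hom_axioms_def iso_def by simp
qed

lemma ext_group_carrier: "carrier ext_group = lift_code ` lift_pairs"
  unfolding ext_group_def transport_group_def by simp

lemma finite_ext_group: "finite (carrier ext_group)"
  unfolding ext_group_carrier using finite_lift_pairs by simp

lemma lift_decode_code [simp]: "p \<in> lift_pairs \<Longrightarrow> lift_decode (lift_code p) = p"
  unfolding lift_decode_def using inj_on_lift_code by simp

lemma ext_group_elem:
  assumes "a \<in> carrier ext_group"
  shows "lift_decode a \<in> lift_pairs" and "lift_code (lift_decode a) = a"
  using assms unfolding ext_group_carrier by auto

lemma lift_code_mem: "p \<in> lift_pairs \<Longrightarrow> lift_code p \<in> carrier ext_group"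
  unfolding ext_group_carrier by simp

lemma ext_group_mult:
  "p \<in> lift_pairs \<Longrightarrow> q \<in> lift_pairs \<Longrightarrow>
    lift_code p \<otimes>\<^bsub>ext_group\<^esub> lift_code q = lift_code (p \<otimes>\<^bsub>lift_group\<^esub> q)"
  using group_hom.hom_mult[OF lift_code_hom] by simp

lemma ext_group_inv:
  "p \<in> lift_pairs \<Longrightarrow> inv\<^bsub>ext_group\<^esub> (lift_code p) = lift_code (inv\<^bsub>lift_group\<^esub> p)"
  using group_hom.hom_inv[OF lift_code_hom] by simp

lemma ext_group_one: "\<one>\<^bsub>ext_group\<^esub> = lift_code (\<one>\<^bsub>AutoGroup G\<^esub>, 1\<^sub>m n)"
  using group_hom.hom_one[OF lift_code_hom] by simp

definition ext_aut :: "nat \<Rightarrow> 'a \<Rightarrow> 'a" where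
  "ext_aut a = fst (lift_decode a)"

definition ext_mat :: "nat \<Rightarrow> complex mat" where
  "ext_mat a = snd (lift_decode a)"

lemma ext_decode_mult:
  assumes a: "a \<in> carrier ext_group" and b: "b \<in> carrier ext_group"
  shows "lift_decode (a \<otimes>\<^bsub>ext_group\<^esub> b) = (ext_aut a \<otimes>\<^bsub>AutoGroup G\<^esub> ext_aut b, ext_mat a * ext_mat b)"
proof -
  obtain \<alpha> M \<beta> L where da: "lift_decode a = (\<alpha>, M)" and db: "lift_decode b = (\<beta>, L)"
    by (cases "lift_decode a", cases "lift_decode b")
  note p = ext_group_elem[OF a, unfolded da] and q = ext_group_elem[OF b, unfolded db]
  have "a \<otimes>\<^bsub>ext_group\<^esub> b = lift_code (\<alpha> \<otimes>\<^bsub>AutoGroup G\<^esub> \<beta>, M * L)"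
    using ext_group_mult[OF p(1) q(1)] p(2) q(2) by simp
  then show ?thesis
    using lift_pairs_mult_closed[OF p(1) q(1)] da db unfolding ext_aut_def ext_mat_def by simp
qed

lemma ext_aut_hom: "group_hom ext_group (aut_stab G \<chi>) ext_aut"
proof -
  have "ext_aut \<in> hom ext_group (aut_stab G \<chi>)"
  proof (rule homI)
    fix a assume "a \<in> carrier ext_group"
    then show "ext_aut a \<in> carrier (aut_stab G \<chi>)"
      using ext_group_elem(1) lift_pairs_memD unfolding ext_aut_def by blast
  next
    fix a b assume "a \<in> carrier ext_group" "b \<in> carrier ext_group"
    then show "ext_aut (a \<otimes>\<^bsub>ext_group\<^esub> b) = ext_aut a \<otimes>\<^bsub>aut_stab G \<chi>\<^esub> ext_aut b"
      by (simp add: ext_aut_def ext_decode_mult)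
  qed
  then show ?thesis
    using ext_group_group aut_stab_group unfolding group_hom_def group_hom_axioms_def by simp
qed

lemma ext_aut_surj: "ext_aut ` carrier ext_group = carrier (aut_stab G \<chi>)"
proof
  show "ext_aut ` carrier ext_group \<subseteq> carrier (aut_stab G \<chi>)"
    using group_hom.hom_closed[OF ext_aut_hom] by blast
  show "carrier (aut_stab G \<chi>) \<subseteq> ext_aut ` carrier ext_group"
  proof
    fix \<alpha> assume "\<alpha> \<in> carrier (aut_stab G \<chi>)"
    then obtain M where p: "(\<alpha>, M) \<in> lift_pairs" using lift_pairs_exist by blast
    then have "ext_aut (lift_code (\<alpha>, M)) = \<alpha>" unfolding ext_aut_def by simp
    then show "\<alpha> \<in> ext_aut ` carrier ext_group" using lift_code_mem[OF p] by force
  qed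
qed

lemma ext_mat_representation: "representation ext_group n ext_mat"
  unfolding representation_def
proof (intro conjI ballI)
  fix a assume "a \<in> carrier ext_group"
  then show "ext_mat a \<in> carrier_mat n n"
    using ext_group_elem(1) lift_pairs_memD unfolding ext_mat_def by blast
next
  have "(\<one>\<^bsub>AutoGroup G\<^esub>, 1\<^sub>m n) \<in> lift_pairs"
    using monoid.one_closed[OF group.is_monoid[OF lift_group_group]] by simp
  then show "ext_mat \<one>\<^bsub>ext_group\<^esub> = 1\<^sub>m n" unfolding ext_mat_def ext_group_one by simp
next
  fix a b assume "a \<in> carrier ext_group" "b \<in> carrier ext_group"
  then show "ext_mat (a \<otimes>\<^bsub>ext_group\<^esub> b) = ext_mat a * ext_mat b"
    by (simp add: ext_mat_def ext_decode_mult)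
qed

definition ext_embed :: "'a \<Rightarrow> nat" where
  "ext_embed g = lift_code (inner_aut G g, \<rho> g)"

lemma ext_embed_mem: "g \<in> carrier G \<Longrightarrow> ext_embed g \<in> carrier ext_group"
  unfolding ext_embed_def by (rule lift_code_mem[OF inner_aut_lift_pair])

lemma ext_embed_mult:
  "x \<in> carrier G \<Longrightarrow> y \<in> carrier G \<Longrightarrow> ext_embed x \<otimes>\<^bsub>ext_group\<^esub> ext_embed y = ext_embed (x \<otimes> y)"
  unfolding ext_embed_def
  by (simp add: ext_group_mult inner_aut_lift_pair inner_aut_mult rho_mult)

lemma ext_aut_embed: "g \<in> carrier G \<Longrightarrow> ext_aut (ext_embed g) = inner_aut G g"
  unfolding ext_aut_def ext_embed_def by (simp add: inner_aut_lift_pair)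

lemma ext_mat_embed: "g \<in> carrier G \<Longrightarrow> ext_mat (ext_embed g) = \<rho> g"
  unfolding ext_mat_def ext_embed_def by (simp add: inner_aut_lift_pair)

lemma ext_conj_embed:
  assumes a: "a \<in> carrier ext_group" and g: "g \<in> carrier G"
  shows "a \<otimes>\<^bsub>ext_group\<^esub> ext_embed g \<otimes>\<^bsub>ext_group\<^esub> inv\<^bsub>ext_group\<^esub> a = ext_embed (ext_aut a g)"
proof -
  interpret L: group lift_group by (rule lift_group_group)
  obtain \<alpha> M where d: "lift_decode a = (\<alpha>, M)" by (cases "lift_decode a")
  have p: "(\<alpha>, M) \<in> lift_pairs" and a_eq: "a = lift_code (\<alpha>, M)"
    using ext_group_elem[OF a] d by auto
  have q: "(inner_aut G g, \<rho> g) \<in> lift_pairs" by (rule inner_aut_lift_pair[OF g])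
  have pq: "(\<alpha>, M) \<otimes>\<^bsub>lift_group\<^esub> (inner_aut G g, \<rho> g) \<in> lift_pairs"
    using L.m_closed[of "(\<alpha>, M)" "(inner_aut G g, \<rho> g)"] p q by simp
  have ip: "inv\<^bsub>lift_group\<^esub> (\<alpha>, M) \<in> lift_pairs" using L.inv_closed[of "(\<alpha>, M)"] p by simp
  have "a \<otimes>\<^bsub>ext_group\<^esub> ext_embed g \<otimes>\<^bsub>ext_group\<^esub> inv\<^bsub>ext_group\<^esub> a
      = lift_code ((\<alpha>, M) \<otimes>\<^bsub>lift_group\<^esub> (inner_aut G g, \<rho> g) \<otimes>\<^bsub>lift_group\<^esub> inv\<^bsub>lift_group\<^esub> (\<alpha>, M))"
    unfolding a_eq ext_embed_def
    by (simp only: ext_group_mult[OF p q] ext_group_inv[OF p] ext_group_mult[OF pq ip])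
  also have "\<dots> = ext_embed (ext_aut a g)"
    unfolding lift_group_conj_inner_aut[OF p g] ext_embed_def ext_aut_def d by simp
  finally show ?thesis .
qed

definition central_kernel :: "'a set" where
  "central_kernel = char_kernel G \<chi> \<inter> grp_center G"

lemma central_kernel_eq: "central_kernel = grp_center G \<inter> {g \<in> carrier G. \<rho> g = 1\<^sub>m n}"
  unfolding central_kernel_def char_kernel_def using central_char_kernel_iff grp_centerD(1) by blast

lemma central_kernel_normal: "central_kernel \<lhd> G"
  unfolding central_kernel_eq
  by (intro central_subgroup_normal subgroups_Inter_pair grp_center_subgroup rho_kernel_subgroup) blast

lemma ext_embed_central_mult:
  assumes z: "z \<in> central_kernel" and g: "g \<in> carrier G"
  shows "ext_embed (z \<otimes> g) = ext_embed g"
  using z g inner_aut_central_mult[of z g] grp_centerD(1)[of z]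
  unfolding ext_embed_def central_kernel_eq by (simp add: rho_mult)

lemma ext_embed_inj_cosets:
  assumes x: "x \<in> carrier G" and y: "y \<in> carrier G" and eq: "ext_embed x = ext_embed y"
  shows "central_kernel #> x = central_kernel #> y"
proof -
  have "(inner_aut G x, \<rho> x) = (inner_aut G y, \<rho> y)"
    using inj_onD[OF inj_on_lift_code eq[unfolded ext_embed_def]] inner_aut_lift_pair x y by blast
  then have inn: "inner_aut G x = inner_aut G y" and rho: "\<rho> x = \<rho> y" by auto
  define w where "w = inv y \<otimes> x"
  have "w \<in> grp_center G" unfolding w_def by (rule inner_aut_eq_imp_central[OF x y inn])
  moreover have "\<rho> w = 1\<^sub>m n" unfolding w_def using x y rho by (simp add: rho_mult)
  ultimately have w: "w \<in> central_kernel" using x y unfolding central_kernel_eq w_def by simp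
  have "x = w \<otimes> y"
    using grp_centerD(2)[of w y] w x y unfolding central_kernel_eq w_def by (auto simp: m_assoc)
  then have "x \<in> central_kernel #> y" using w y unfolding r_coset_def by blast
  then show ?thesis
    using repr_independence[OF _ y normal_imp_subgroup[OF central_kernel_normal]] by blast
qed

definition ext_embed_quot :: "'a set \<Rightarrow> nat" where
  "ext_embed_quot X = ext_embed (SOME x. x \<in> X)"

lemma ext_embed_quot_coset:
  assumes g: "g \<in> carrier G" shows "ext_embed_quot (central_kernel #> g) = ext_embed g"
proof -
  have "g \<in> central_kernel #> g"
    using rcos_self[OF g normal_imp_subgroup[OF central_kernel_normal]] .
  then have "(SOME x. x \<in> central_kernel #> g) \<in> central_kernel #> g" by (rule someI)
  then obtain z where "z \<in> central_kernel" "(SOME x. x \<in> central_kernel #> g) = z \<otimes> g"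
    unfolding r_coset_def by blast
  then show ?thesis unfolding ext_embed_quot_def using ext_embed_central_mult g by simp
qed

lemma central_kernel_quot_carrier: "carrier (G Mod central_kernel) = (\<lambda>g. central_kernel #> g) ` carrier G"
  unfolding FactGroup_def RCOSETS_def by auto

lemma ext_embed_quot_image: "ext_embed_quot ` carrier (G Mod central_kernel) = ext_embed ` carrier G"
  unfolding central_kernel_quot_carrier image_comp by (intro image_cong refl) (simp add: ext_embed_quot_coset)

lemma ext_embed_quot_mon: "ext_embed_quot \<in> mon (G Mod central_kernel) ext_group"
  unfolding mon_def
proof (intro CollectI conjI)
  show "ext_embed_quot \<in> hom (G Mod central_kernel) ext_group"
  proof (rule homI)
    fix X assume "X \<in> carrier (G Mod central_kernel)"
    then obtain x where "x \<in> carrier G" "X = central_kernel #> x" unfolding central_kernel_quot_carrier by blast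
    then show "ext_embed_quot X \<in> carrier ext_group" by (simp add: ext_embed_quot_coset ext_embed_mem)
  next
    fix X Y assume "X \<in> carrier (G Mod central_kernel)" "Y \<in> carrier (G Mod central_kernel)"
    then obtain x y where x: "x \<in> carrier G" "X = central_kernel #> x"
      and y: "y \<in> carrier G" "Y = central_kernel #> y" unfolding central_kernel_quot_carrier by blast
    have "X \<otimes>\<^bsub>G Mod central_kernel\<^esub> Y = central_kernel #> (x \<otimes> y)"
      unfolding x y FactGroup_def using normal.rcos_sum[OF central_kernel_normal x(1) y(1)] by simp
    then show "ext_embed_quot (X \<otimes>\<^bsub>G Mod central_kernel\<^esub> Y)
        = ext_embed_quot X \<otimes>\<^bsub>ext_group\<^esub> ext_embed_quot Y"
      using x y by (simp add: ext_embed_quot_coset ext_embed_mult)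
  qed
  show "inj_on ext_embed_quot (carrier (G Mod central_kernel))"
  proof (rule inj_onI)
    fix X Y assume "X \<in> carrier (G Mod central_kernel)" "Y \<in> carrier (G Mod central_kernel)"
      and eq: "ext_embed_quot X = ext_embed_quot Y"
    then obtain x y where x: "x \<in> carrier G" "X = central_kernel #> x"
      and y: "y \<in> carrier G" "Y = central_kernel #> y" unfolding central_kernel_quot_carrier by blast
    have "ext_embed x = ext_embed y"
      using eq unfolding x(2) y(2) ext_embed_quot_coset[OF x(1)] ext_embed_quot_coset[OF y(1)] .
    then show "X = Y" unfolding x(2) y(2) by (rule ext_embed_inj_cosets[OF x(1) y(1)])
  qed
qed

lemma ext_embed_quot_normal: "ext_embed_quot ` carrier (G Mod central_kernel) \<lhd> ext_group"
proof -
  interpret E: group ext_group by (rule ext_group_group)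
  have "group_hom (G Mod central_kernel) ext_group ext_embed_quot"
    using normal.factorgroup_is_group[OF central_kernel_normal] ext_group_group ext_embed_quot_mon
    unfolding group_hom_def group_hom_axioms_def mon_def by simp
  show ?thesis unfolding E.normal_inv_iff
  proof (intro conjI ballI)
    show "subgroup (ext_embed_quot ` carrier (G Mod central_kernel)) ext_group"
      by (rule group_hom.img_is_subgroup) fact
    fix a h assume a: "a \<in> carrier ext_group" and "h \<in> ext_embed_quot ` carrier (G Mod central_kernel)"
    then obtain g where g: "g \<in> carrier G" "h = ext_embed g" unfolding ext_embed_quot_image by blast
    have "ext_aut a \<in> auto G" using group_hom.hom_closed[OF ext_aut_hom a] by (rule aut_stabD(1))
    then have "ext_aut a g \<in> carrier G" using g(1) by (rule autoD(2))
    then show "a \<otimes>\<^bsub>ext_group\<^esub> h \<otimes>\<^bsub>ext_group\<^esub> inv\<^bsub>ext_group\<^esub> a \<in> ext_embed_quot ` carrier (G Mod central_kernel)"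
      unfolding ext_embed_quot_image g(2) ext_conj_embed[OF a g(1)] by blast
  qed
qed

lemma ext_kernel_subset_center: "kernel ext_group (aut_stab G \<chi>) ext_aut \<subseteq> grp_center ext_group"
proof
  fix a assume ak: "a \<in> kernel ext_group (aut_stab G \<chi>) ext_aut"
  then have a: "a \<in> carrier ext_group" and triv: "ext_aut a = \<one>\<^bsub>AutoGroup G\<^esub>" unfolding kernel_def by auto
  obtain M where d: "lift_decode a = (\<one>\<^bsub>AutoGroup G\<^esub>, M)"
    using triv unfolding ext_aut_def by (cases "lift_decode a") auto
  note p = ext_group_elem[OF a, unfolded d]
  note p' = lift_pairsD[OF p(1)]
  have "M * \<rho> g = \<rho> g * M" if "g \<in> carrier G" for g
    using p'(3)[OF that] that by (simp add: AutoGroup_one_apply)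
  then obtain c where c: "M = c \<cdot>\<^sub>m 1\<^sub>m n" using schur[OF p'(2)] by blast
  have "a \<otimes>\<^bsub>ext_group\<^esub> b = b \<otimes>\<^bsub>ext_group\<^esub> a" if b: "b \<in> carrier ext_group" for b
  proof -
    obtain \<beta> L where db: "lift_decode b = (\<beta>, L)" by (cases "lift_decode b")
    note q = ext_group_elem[OF b, unfolded db]
    note q' = lift_pairsD[OF q(1)]
    interpret A: group "AutoGroup G" by (rule AutoGroup)
    show ?thesis
      using p q q' ext_group_mult[OF p(1) q(1)] ext_group_mult[OF q(1) p(1)] c
      by (simp add: mult_smult_assoc_mat[of _ n n _ n] mult_smult_distrib[of _ n n _ n])
  qed
  then show "a \<in> grp_center ext_group" using a unfolding grp_center_def by blast
qed

lemma ext_center_subset_centralizer: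
  "grp_center ext_group \<subseteq> grp_centralizer ext_group (ext_embed_quot ` carrier (G Mod central_kernel))"
proof -
  have "ext_embed_quot ` carrier (G Mod central_kernel) \<subseteq> carrier ext_group"
    using ext_embed_quot_mon unfolding mon_def hom_def by blast
  then show ?thesis unfolding grp_center_def grp_centralizer_def by blast
qed

lemma ext_mat_irreducible: "irreducible_rep ext_group n ext_mat"
  unfolding irreducible_rep_def
proof (intro conjI allI impI ext_mat_representation dim_pos)
  fix W assume W: "vec_subspace n W \<and> (\<forall>a \<in> carrier ext_group. \<forall>w \<in> W. ext_mat a *\<^sub>v w \<in> W)"
  then have "\<rho> g *\<^sub>v w \<in> W" if "g \<in> carrier G" "w \<in> W" for g w
    using that ext_embed_mem ext_mat_embed by metis
  then show "W = {0\<^sub>v n} \<or> W = carrier_vec n" using invariant_subspace_trivial W by blast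
qed

lemma ext_char_irreducible: "irr_char ext_group (\<lambda>a. mat_trace (ext_mat a))"
  unfolding irr_char_def using ext_mat_irreducible by blast

lemma ext_char_extends:
  "g \<in> carrier G \<Longrightarrow> mat_trace (ext_mat (ext_embed_quot (central_kernel #> g))) = \<chi> g"
  by (simp add: ext_embed_quot_coset ext_mat_embed character)

end

section \<open>Perfect groups: the centraliser is the centre\<close>

locale perfect_irrep = irrep +
  assumes perfect: "derived G (carrier G) = carrier G"
begin

abbreviation ext_centralizer :: "nat set" where
  "ext_centralizer \<equiv> grp_centralizer ext_group (ext_embed_quot ` carrier (G Mod central_kernel))"

lemma ext_centralizer_subset_kernel: "ext_centralizer \<subseteq> kernel ext_group (aut_stab G \<chi>) ext_aut"
proof
  interpret E: group ext_group by (rule ext_group_group)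
  fix a assume "a \<in> ext_centralizer"
  then have a: "a \<in> carrier ext_group"
    and comm: "\<And>g. g \<in> carrier G \<Longrightarrow> a \<otimes>\<^bsub>ext_group\<^esub> ext_embed g = ext_embed g \<otimes>\<^bsub>ext_group\<^esub> a"
    unfolding grp_centralizer_def ext_embed_quot_image by auto
  have \<alpha>: "ext_aut a \<in> auto G" using group_hom.hom_closed[OF ext_aut_hom a] by (rule aut_stabD(1))
  have "inner_aut G (ext_aut a g) = inner_aut G g" if g: "g \<in> carrier G" for g
  proof -
    have "a \<otimes>\<^bsub>ext_group\<^esub> ext_embed g \<otimes>\<^bsub>ext_group\<^esub> inv\<^bsub>ext_group\<^esub> a = ext_embed g"
      using comm[OF g] a ext_embed_mem[OF g] by (simp add: E.m_assoc)
    then have "ext_embed (ext_aut a g) = ext_embed g" unfolding ext_conj_embed[OF a g] .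
    then show ?thesis using ext_aut_embed autoD(2)[OF \<alpha> g] g by metis
  qed
  then have "ext_aut a g = g" if "g \<in> carrier G" for g
    using perfect_hom_fixed_if_inner_aut_eq[OF perfect autoD(1)[OF \<alpha>]] that by blast
  then have "ext_aut a = \<one>\<^bsub>AutoGroup G\<^esub>"
    using \<alpha> id_in_auto by (intro AutoGroup_eqI) (auto simp: AutoGroup_one_apply AutoGroup_def BijGroup_def)
  then show "a \<in> kernel ext_group (aut_stab G \<chi>) ext_aut" using a unfolding kernel_def by simp
qed

lemma ext_centralizer_eq_kernel: "ext_centralizer = kernel ext_group (aut_stab G \<chi>) ext_aut"
  using ext_centralizer_subset_kernel ext_kernel_subset_center ext_center_subset_centralizer by blast

lemma ext_centralizer_eq_center: "ext_centralizer = grp_center ext_group"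
  using ext_centralizer_subset_kernel ext_kernel_subset_center ext_center_subset_centralizer by blast

definition ext_quot_iso :: "nat set \<Rightarrow> 'a \<Rightarrow> 'a" where
  "ext_quot_iso X = the_elem (ext_aut ` X)"

lemma ext_quot_iso: "ext_quot_iso \<in> iso (ext_group Mod ext_centralizer) (aut_stab G \<chi>)"
  unfolding ext_centralizer_eq_kernel ext_quot_iso_def
  by (rule group_hom.FactGroup_iso_set[OF ext_aut_hom ext_aut_surj])

lemma ext_conj_embed_quot:
  assumes a: "a \<in> carrier ext_group" and g: "g \<in> carrier G"
  shows "a \<otimes>\<^bsub>ext_group\<^esub> ext_embed_quot (central_kernel #> g) \<otimes>\<^bsub>ext_group\<^esub> inv\<^bsub>ext_group\<^esub> a
    = ext_embed_quot (central_kernel #> ext_quot_iso (ext_centralizer #>\<^bsub>ext_group\<^esub> a) g)"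
proof -
  have "ext_aut a \<in> auto G" using group_hom.hom_closed[OF ext_aut_hom a] by (rule aut_stabD(1))
  then have "ext_aut a g \<in> carrier G" using g by (rule autoD(2))
  moreover have "ext_quot_iso (ext_centralizer #>\<^bsub>ext_group\<^esub> a) = ext_aut a"
    unfolding ext_centralizer_eq_kernel ext_quot_iso_def
    by (rule group_hom.the_elem_image_kernel_coset[OF ext_aut_hom a])
  ultimately show ?thesis using ext_conj_embed[OF a g] by (simp add: ext_embed_quot_coset g)
qed

end

theorem lemma6p3:
  fixes p :: nat and S :: "'s monoid" and G :: "'a monoid" and \<chi> :: "'a \<Rightarrow> complex"
  assumes "prime p"
    and "simple_group S" and "finite (carrier S)" and "\<not> comm_group S"
    and "group G"
    and "universal_p'_covering_group p G S"
    and "irr_char G \<chi>"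
  shows "let N = char_kernel G \<chi> \<inter> grp_center G; Gb = G Mod N in
    \<exists>(A :: nat monoid) \<iota> \<phi>. group A \<and> finite (carrier A) \<and>
       \<iota> \<in> mon Gb A \<and> \<iota> ` carrier Gb \<lhd> A \<and>
       \<phi> \<in> iso (A Mod grp_centralizer A (\<iota> ` carrier Gb)) (aut_stab G \<chi>) \<and>
       (\<forall>a \<in> carrier A. \<forall>g \<in> carrier G.
          a \<otimes>\<^bsub>A\<^esub> \<iota> (N #>\<^bsub>G\<^esub> g) \<otimes>\<^bsub>A\<^esub> inv\<^bsub>A\<^esub> a
            = \<iota> (N #>\<^bsub>G\<^esub> (\<phi> (grp_centralizer A (\<iota> ` carrier Gb) #>\<^bsub>A\<^esub> a) g))) \<and>
       grp_centralizer A (\<iota> ` carrier Gb) = grp_center A \<and>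
       (\<exists>\<psi>. irr_char A \<psi> \<and> (\<forall>g \<in> carrier G. \<psi> (\<iota> (N #>\<^bsub>G\<^esub> g)) = \<chi> g))"
proof -
  obtain n \<rho> where "irreducible_rep G n \<rho>" "\<forall>g \<in> carrier G. \<chi> g = mat_trace (\<rho> g)"
    using assms(7) unfolding irr_char_def by blast
  moreover note universal_p'_covering_group_finite_perfect[OF assms(5,6)]
  ultimately have "perfect_irrep G n \<rho> \<chi>"
    using assms(5) unfolding perfect_irrep_def perfect_irrep_axioms_def irrep_def irrep_axioms_def by auto
  then interpret perfect_irrep G n \<rho> \<chi> .
  show ?thesis
    unfolding Let_def central_kernel_def[symmetric]
    using ext_group_group finite_ext_group ext_embed_quot_mon ext_embed_quot_normal ext_quot_iso
      ext_conj_embed_quot ext_centralizer_eq_center ext_char_irreducible ext_char_extends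
    by blast
qed

end
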